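(* Let $\mathcal{X}$ be a complex Euclidean space of dimension $d$, and let $\rho,\sigma$ be positive definite operators on $\mathcal{X}$ with eigenvalues $\lambda_1^\downarrow(\rho)\ge\cdots\ge\lambda_d^\downarrow(\rho)$ and $\lambda_1^\downarrow(\sigma)\ge\cdots\ge\lambda_d^\downarrow(\sigma)$, and let $\lambda_j^\uparrow(\sigma)=\lambda_{d+1-j}^\downarrow(\sigma)$. Then $$\max_{\Phi}S(\Phi(\rho)\,\|\,\sigma)=\operatorname{Tr}(\rho\log\rho)-\sum_{j=1}^d\lambda_j^\downarrow(\rho)\log\lambda_j^\uparrow(\sigma),$$ where the maximum is over all bi-stochastic maps $\Phi$ on the operators on $\mathcal{X}$; in particular this maximum coincides with $\max_{U\in U(\mathcal{X})}S(U\rho U^*\|\sigma)$.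
   Context: A bi-stochastic map (bi-stochastic quantum channel) on $\mathcal{X}$ is a completely positive, trace-preserving, unital linear map $\Phi$ from the operators on $\mathcal{X}$ to themselves ($\Phi(\mathbb{1})=\mathbb{1}$). $U(\mathcal{X})$ denotes the group of unitary operators on $\mathcal{X}$. Logarithms are base 2 and are applied to positive definite operators via their spectral decomposition. For positive definite $P,Q$ on $\mathcal{X}$, the relative entropy is $S(P\|Q)=\operatorname{Tr}(P\log P)-\operatorname{Tr}(P\log Q)$. *)

theory Defs
  imports "Jordan_Normal_Form.Schur_Decomposition" "Jordan_Normal_Form.Char_Poly"
begin

(* Operators on a complex Euclidean space X = C^d are represented as d x d complex matrices. *)

definition mtrace :: "complex mat \<Rightarrow> complex" where
  "mtrace A = (\<Sum>i<dim_row A. A $$ (i,i))"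

definition unitary_mat :: "nat \<Rightarrow> complex mat \<Rightarrow> bool" where
  "unitary_mat d U \<longleftrightarrow> U \<in> carrier_mat d d \<and> mat_adjoint U * U = 1\<^sub>m d"

definition hermitian_mat :: "nat \<Rightarrow> complex mat \<Rightarrow> bool" where
  "hermitian_mat d A \<longleftrightarrow> A \<in> carrier_mat d d \<and> mat_adjoint A = A"

definition psd_mat :: "nat \<Rightarrow> complex mat \<Rightarrow> bool" where
  "psd_mat d A \<longleftrightarrow> hermitian_mat d A \<and>
     (\<forall>v \<in> carrier_vec d. 0 \<le> Re (conjugate v \<bullet> (A *\<^sub>v v)))"

definition pd_mat :: "nat \<Rightarrow> complex mat \<Rightarrow> bool" where
  "pd_mat d A \<longleftrightarrow> hermitian_mat d A \<and>
     (\<forall>v \<in> carrier_vec d. v \<noteq> 0\<^sub>v d \<longrightarrow> 0 < Re (conjugate v \<bullet> (A *\<^sub>v v)))"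

definition mat_log :: "complex mat \<Rightarrow> complex mat" where
  "mat_log A = (SOME L. \<exists>U (f :: nat \<Rightarrow> real).
      unitary_mat (dim_row A) U \<and> (\<forall>i<dim_row A. 0 < f i) \<and>
      A = U * mat_diag (dim_row A) (\<lambda>i. complex_of_real (f i)) * mat_adjoint U \<and>
      L = U * mat_diag (dim_row A) (\<lambda>i. complex_of_real (log 2 (f i))) * mat_adjoint U)"

(* relative entropy S(P||Q) = Tr(P log P) - Tr(P log Q) (a real number for P,Q > 0) *)
definition rel_entropy :: "complex mat \<Rightarrow> complex mat \<Rightarrow> real" where
  "rel_entropy P Q = Re (mtrace (P * mat_log P) - mtrace (P * mat_log Q))"

definition linear_map_on :: "nat \<Rightarrow> (complex mat \<Rightarrow> complex mat) \<Rightarrow> bool" where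
  "linear_map_on d \<Phi> \<longleftrightarrow>
     (\<forall>A \<in> carrier_mat d d. \<Phi> A \<in> carrier_mat d d) \<and>
     (\<forall>A \<in> carrier_mat d d. \<forall>B \<in> carrier_mat d d. \<Phi> (A + B) = \<Phi> A + \<Phi> B) \<and>
     (\<forall>A \<in> carrier_mat d d. \<forall>c. \<Phi> (c \<cdot>\<^sub>m A) = c \<cdot>\<^sub>m \<Phi> A)"

(* (Phi \<otimes> id_k) acting on operators on C^d \<otimes> C^k, with basis e_a \<otimes> e_x indexed by a*k+x *)
definition tensor_id :: "nat \<Rightarrow> nat \<Rightarrow> (complex mat \<Rightarrow> complex mat) \<Rightarrow> complex mat \<Rightarrow> complex mat" where
  "tensor_id d k \<Phi> M = Matrix.mat (d*k) (d*k) (\<lambda>(i,j).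
      \<Phi> (Matrix.mat d d (\<lambda>(a,b). M $$ (a*k + i mod k, b*k + j mod k))) $$ (i div k, j div k))"

definition completely_positive :: "nat \<Rightarrow> (complex mat \<Rightarrow> complex mat) \<Rightarrow> bool" where
  "completely_positive d \<Phi> \<longleftrightarrow>
     (\<forall>k. \<forall>M. psd_mat (d*k) M \<longrightarrow> psd_mat (d*k) (tensor_id d k \<Phi> M))"

definition bistochastic :: "nat \<Rightarrow> (complex mat \<Rightarrow> complex mat) \<Rightarrow> bool" where
  "bistochastic d \<Phi> \<longleftrightarrow> linear_map_on d \<Phi> \<and> completely_positive d \<Phi> \<and>
     (\<forall>A \<in> carrier_mat d d. mtrace (\<Phi> A) = mtrace A) \<and> \<Phi> (1\<^sub>m d) = 1\<^sub>m d"

(* lam 0 \<ge> lam 1 \<ge> ... \<ge> lam (d-1) are the eigenvalues of A, counted with multiplicity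
   (0-based indexing: lam j is the paper's \<lambda>^\<down>_{j+1}) *)
definition eigenvalues_desc :: "nat \<Rightarrow> complex mat \<Rightarrow> (nat \<Rightarrow> real) \<Rightarrow> bool" where
  "eigenvalues_desc d A lam \<longleftrightarrow>
     (\<forall>i j. i \<le> j \<longrightarrow> j < d \<longrightarrow> lam j \<le> lam i) \<and>
     char_poly A = (\<Prod>i<d. [:- complex_of_real (lam i), 1:])"

end

theory Submission
  imports Defs "HOL-Computational_Algebra.Fundamental_Theorem_Algebra" "HOL-Combinatorics.List_Permutation"
begin

text \<open>Diagonalise \<open>\<rho> = W diag(l) W\<^sup>*\<close>, \<open>\<sigma> = V diag(m) V\<^sup>*\<close> and \<open>\<Phi>(\<rho>) = X diag(\<nu>) X\<^sup>*\<close>.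
  Since \<open>\<Phi>\<close> is positive, unital and trace preserving, \<open>\<nu> = D l\<close> for the doubly stochastic matrix
  \<open>D\<^sub>i\<^sub>k = \<langle>x\<^sub>i, \<Phi>(w\<^sub>k w\<^sub>k\<^sup>*) x\<^sub>i\<rangle>\<close>, so convexity of \<open>t log t\<close> gives
  \<open>Tr \<Phi>(\<rho>) log \<Phi>(\<rho>) \<le> Tr \<rho> log \<rho>\<close>. The cross term \<open>-Tr \<Phi>(\<rho>) log \<sigma>\<close> equals
  \<open>\<Sum>\<^sub>k\<^sub>j l\<^sub>k M\<^sub>k\<^sub>j (-log m\<^sub>j)\<close> with \<open>M = D\<^sup>T |X\<^sup>* V|\<^sup>2\<close> doubly stochastic, and by the rearrangement
  inequality it is largest when the eigenvalues of \<open>\<rho>\<close> in decreasing order meet those of \<open>\<sigma>\<close>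
  in increasing order. That coupling is realised by a unitary conjugation, and unitary
  conjugations are bistochastic.\<close>

section \<open>Adjoints, unitary matrices and traces\<close>

abbreviation dg :: "nat \<Rightarrow> (nat \<Rightarrow> real) \<Rightarrow> complex mat" where
  "dg n f \<equiv> mat_diag n (\<lambda>i. complex_of_real (f i))"

lemma dim_mat_adjoint[simp]:
  "dim_row (mat_adjoint A) = dim_col A" "dim_col (mat_adjoint A) = dim_row A"
  unfolding mat_adjoint_def by (auto simp: mat_of_rows_def)

lemma index_mat_adjoint[simp]:
  "i < dim_col A \<Longrightarrow> j < dim_row A \<Longrightarrow> mat_adjoint A $$ (i,j) = cnj (A $$ (j,i))"
  unfolding mat_adjoint_def by (auto simp: mat_of_rows_def)

lemma mat_adjoint_carrier[simp]: "A \<in> carrier_mat n m \<Longrightarrow> mat_adjoint A \<in> carrier_mat m n"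
  by (metis dim_mat_adjoint carrier_matD carrier_matI)

lemma mult_carrier_mat_square[simp]:
  "A \<in> carrier_mat n n \<Longrightarrow> B \<in> carrier_mat n n \<Longrightarrow> A * B \<in> carrier_mat n n"
  by auto

text \<open>Matrix entries are expanded into explicit sums over \<open>{..<n}\<close> throughout.\<close>

declare index_mult_mat(1)[simp del]

lemma index_mult_mat_sum[simp]:
  "i < dim_row A \<Longrightarrow> j < dim_col B \<Longrightarrow> dim_col A = dim_row B \<Longrightarrow>
   (A * B) $$ (i,j) = (\<Sum>k<dim_row B. A $$ (i,k) * B $$ (k,j))"
  by (auto simp: scalar_prod_def lessThan_atLeast0 index_mult_mat(1))

lemma index_mult_mat_carrier:
  "A \<in> carrier_mat n m \<Longrightarrow> B \<in> carrier_mat m p \<Longrightarrow> i < n \<Longrightarrow> j < p \<Longrightarrow>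
   (A * B) $$ (i,j) = (\<Sum>k<m. A $$ (i,k) * B $$ (k,j))"
  by auto

lemma mat_adjoint_mat_adjoint[simp]: "mat_adjoint (mat_adjoint A) = (A :: complex mat)"
  by (rule eq_matI) auto

lemma mat_adjoint_mult:
  assumes "(A :: complex mat) \<in> carrier_mat n m" and "B \<in> carrier_mat m p"
  shows "mat_adjoint (A * B) = mat_adjoint B * mat_adjoint A"
  using assms by (intro eq_matI) (auto simp: sum_conjugate[where 'a=complex, simplified] mult.commute)

lemma index_mult_diag_mult:
  assumes "U \<in> carrier_mat n n" and "V \<in> carrier_mat n n" and "i < n" and "j < n"
  shows "(U * mat_diag n g * V) $$ (i,j) = (\<Sum>k<n. U $$ (i,k) * g k * V $$ (k,j))"
  using assms by (simp add: mat_diag_mult_right[OF assms(1)])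

lemma mult_cnj_self: "z * cnj z = complex_of_real (cmod z) ^ 2"
  using complex_norm_square[of z] by simp

lemma dim_mat_diag[simp]: "dim_row (mat_diag n f) = n" "dim_col (mat_diag n f) = n"
  by (auto simp: mat_diag_def)

lemma index_mat_diag[simp]: "i < n \<Longrightarrow> j < n \<Longrightarrow> mat_diag n f $$ (i,j) = (if i = j then f j else 0)"
  by (auto simp: mat_diag_def)

lemma index_mat_diag_mult[simp]:
  "i < n \<Longrightarrow> j < dim_col B \<Longrightarrow> dim_row B = n \<Longrightarrow> (mat_diag n f * B) $$ (i,j) = f i * B $$ (i,j)"
  by (simp add: if_distrib[of "\<lambda>x. x * _"] cong: if_cong)

lemma index_mult_mat_diag[simp]:
  "i < dim_row B \<Longrightarrow> j < n \<Longrightarrow> dim_col B = n \<Longrightarrow> (B * mat_diag n f) $$ (i,j) = B $$ (i,j) * f j"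
  by (simp add: if_distrib[of "\<lambda>x. _ * x"] cong: if_cong)

lemma unitary_mat_carrier: "unitary_mat d U \<Longrightarrow> U \<in> carrier_mat d d"
  unfolding unitary_mat_def by auto

lemma unitary_mat_right: "unitary_mat d U \<Longrightarrow> U * mat_adjoint U = 1\<^sub>m d"
  unfolding unitary_mat_def by (auto intro: mat_mult_left_right_inverse)

lemma unitary_mat_adjoint: "unitary_mat d U \<Longrightarrow> unitary_mat d (mat_adjoint U)"
  using unitary_mat_right[of d U] unfolding unitary_mat_def by auto

lemma unitary_mat_cancel:
  assumes "unitary_mat n U" and "X \<in> carrier_mat n k"
  shows "mat_adjoint U * (U * X) = X" "U * (mat_adjoint U * X) = X"
proof -
  have U: "U \<in> carrier_mat n n" using assms(1) unitary_mat_carrier by auto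
  have "mat_adjoint U * (U * X) = (mat_adjoint U * U) * X"
    using U assms(2) by (simp add: assoc_mult_mat[of _ n n _ n _ k])
  thus "mat_adjoint U * (U * X) = X" using assms unfolding unitary_mat_def by auto
  have "U * (mat_adjoint U * X) = (U * mat_adjoint U) * X"
    using U assms(2) by (simp add: assoc_mult_mat[of _ n n _ n _ k])
  thus "U * (mat_adjoint U * X) = X" using unitary_mat_right[OF assms(1)] assms(2) by auto
qed

lemma unitary_mat_mult:
  assumes "unitary_mat d U" and "unitary_mat d V"
  shows "unitary_mat d (U * V)"
proof -
  have U: "U \<in> carrier_mat d d" and V: "V \<in> carrier_mat d d"
    using assms unitary_mat_carrier by auto
  have "mat_adjoint (U * V) * (U * V) = mat_adjoint V * (mat_adjoint U * (U * V))"
    using U V by (simp add: mat_adjoint_mult[OF U V] assoc_mult_mat[of _ d d _ d _ d])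
  also have "\<dots> = 1\<^sub>m d"
    using unitary_mat_cancel(1)[OF assms(1) V] assms(2) unfolding unitary_mat_def by simp
  finally show ?thesis using U V unfolding unitary_mat_def by auto
qed

lemma unitary_mat_conj_diag:
  assumes "unitary_mat d U"
  shows "mat_adjoint U * (U * mat_diag d g * mat_adjoint U) * U = mat_diag d g"
proof -
  have U: "U \<in> carrier_mat d d" using assms unitary_mat_carrier by auto
  have "mat_adjoint U * (U * mat_diag d g * mat_adjoint U) * U
      = (mat_adjoint U * U) * mat_diag d g * (mat_adjoint U * U)"
    using U by (simp add: assoc_mult_mat[of _ d d _ d _ d])
  thus ?thesis using assms unfolding unitary_mat_def by simp
qed

lemma unitary_mat_rows_orthonormal:
  assumes "unitary_mat d U" and "i < d" and "j < d"
  shows "(\<Sum>k<d. U $$ (i,k) * cnj (U $$ (j,k))) = (if i = j then 1 else 0)"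
proof -
  have "(U * mat_adjoint U) $$ (i,j) = (\<Sum>k<d. U $$ (i,k) * cnj (U $$ (j,k)))"
    using unitary_mat_carrier[OF assms(1)] assms(2,3) by simp
  thus ?thesis using unitary_mat_right[OF assms(1)] assms(2,3) by simp
qed

lemma unitary_mat_cols_orthonormal:
  assumes "unitary_mat d U" and "i < d" and "j < d"
  shows "(\<Sum>k<d. cnj (U $$ (k,i)) * U $$ (k,j)) = (if i = j then 1 else 0)"
proof -
  have "(mat_adjoint U * U) $$ (i,j) = (\<Sum>k<d. cnj (U $$ (k,i)) * U $$ (k,j))"
    using unitary_mat_carrier[OF assms(1)] assms(2,3) by simp
  thus ?thesis using assms unfolding unitary_mat_def by simp
qed

lemma unitary_mat_row_norm: "unitary_mat d Y \<Longrightarrow> i < d \<Longrightarrow> (\<Sum>j<d. (cmod (Y $$ (i,j)))\<^sup>2) = 1"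
  using unitary_mat_rows_orthonormal[of d Y i i]
  by (simp add: mult_cnj_self flip: of_real_sum of_real_power)

lemma unitary_mat_col_norm: "unitary_mat d Y \<Longrightarrow> j < d \<Longrightarrow> (\<Sum>i<d. (cmod (Y $$ (i,j)))\<^sup>2) = 1"
  using unitary_mat_cols_orthonormal[of d Y j j]
  by (simp add: mult_cnj_self mult.commute[of "cnj _"] flip: of_real_sum of_real_power)

lemma unitary_mat_col_nonzero:
  assumes "unitary_mat d U" and "i < d"
  shows "col U i \<noteq> 0\<^sub>v d"
proof
  assume "col U i = 0\<^sub>v d"
  hence "\<forall>k<d. U $$ (k,i) = 0"
    using unitary_mat_carrier[OF assms(1)] assms(2) by (metis carrier_matD col_def index_vec index_zero_vec(1))
  thus False using unitary_mat_cols_orthonormal[OF assms(1,2,2)] by simp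
qed

lemma mtrace_mult_commute:
  "A \<in> carrier_mat n m \<Longrightarrow> B \<in> carrier_mat m n \<Longrightarrow> mtrace (A * B) = mtrace (B * A)"
  unfolding mtrace_def by (simp add: sum.swap[of _ "{..<n}"] mult.commute)

lemma mtrace_unitary_conj:
  assumes "unitary_mat n U" and "A \<in> carrier_mat n n"
  shows "mtrace (U * A * mat_adjoint U) = mtrace A"
proof -
  have U: "U \<in> carrier_mat n n" using assms(1) unitary_mat_carrier by auto
  have "mtrace ((U * A) * mat_adjoint U) = mtrace (mat_adjoint U * (U * A))"
    by (rule mtrace_mult_commute[of _ n n]) (use U assms(2) in auto)
  thus ?thesis using unitary_mat_cancel(1)[OF assms] by simp
qed

lemma quadratic_form_sum:
  "B \<in> carrier_mat d d \<Longrightarrow> v \<in> carrier_vec d \<Longrightarrow>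
   conjugate v \<bullet> (B *\<^sub>v v) = (\<Sum>a<d. \<Sum>b<d. cnj (v $ a) * B $$ (a,b) * v $ b)"
  by (simp add: scalar_prod_def lessThan_atLeast0 sum_distrib_left mult.assoc)

lemma index_adjoint_conj_diag:
  assumes "X \<in> carrier_mat d d" and "B \<in> carrier_mat d d" and "i < d"
  shows "(mat_adjoint X * B * X) $$ (i,i) = (\<Sum>a<d. \<Sum>b<d. cnj (X $$ (a,i)) * B $$ (a,b) * X $$ (b,i))"
  using assms by (simp add: sum_distrib_right) (rule sum.swap)

lemma index_adjoint_conj_diag_col:
  assumes "(X :: complex mat) \<in> carrier_mat d d" and "B \<in> carrier_mat d d" and "i < d"
  shows "(mat_adjoint X * B * X) $$ (i,i) = conjugate (col X i) \<bullet> (B *\<^sub>v col X i)"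
  unfolding index_adjoint_conj_diag[OF assms] quadratic_form_sum[OF assms(2) col_carrier_vec[OF assms(3,1)]]
  using assms by (intro sum.cong refl) simp


section \<open>The spectral theorem for Hermitian matrices\<close>

lemma unitary_mat_normalize_cols:
  assumes W: "W \<in> carrier_mat n n"
    and orth: "\<And>i j. i < n \<Longrightarrow> j < n \<Longrightarrow> (\<Sum>k<n. W $$ (k,i) * cnj (W $$ (k,j))) = 0 \<longleftrightarrow> i \<noteq> j"
  defines "s j \<equiv> \<Sum>k<n. (cmod (W $$ (k,j)))\<^sup>2"
  shows "unitary_mat n (Matrix.mat n n (\<lambda>(i,j). W $$ (i,j) / complex_of_real (sqrt (s j))))"
proof -
  define U where "U = Matrix.mat n n (\<lambda>(i,j). W $$ (i,j) / complex_of_real (sqrt (s j)))"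
  have s_eq: "complex_of_real (s j) = (\<Sum>k<n. W $$ (k,j) * cnj (W $$ (k,j)))" for j
    unfolding s_def of_real_sum by (rule sum.cong[OF refl], rule complex_norm_square)
  have s_pos: "s j > 0" if "j < n" for j
  proof -
    have "s j \<ge> 0" unfolding s_def by (simp add: sum_nonneg)
    moreover have "s j \<noteq> 0" using orth[OF that that] s_eq[of j] by auto
    ultimately show ?thesis by simp
  qed
  have U: "U \<in> carrier_mat n n" unfolding U_def by auto
  have "mat_adjoint U * U = 1\<^sub>m n"
  proof (rule eq_matI)
    fix i j assume "i < dim_row (1\<^sub>m n)" "j < dim_col (1\<^sub>m n)"
    hence ij: "i < n" "j < n" by auto
    have "(mat_adjoint U * U) $$ (i,j) = (\<Sum>k<n. cnj (U $$ (k,i)) * U $$ (k,j))"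
      using U ij by (simp add: index_mult_mat_carrier[of _ n n _ n])
    also have "\<dots> = (\<Sum>k<n. W $$ (k,j) * cnj (W $$ (k,i)))
        / (complex_of_real (sqrt (s i)) * complex_of_real (sqrt (s j)))"
      unfolding U_def using ij by (simp add: sum_divide_distrib field_simps)
    also have "\<dots> = 1\<^sub>m n $$ (i,j)"
    proof (cases "i = j")
      case True
      have "sqrt (s i) * sqrt (s i) = s i" using s_pos[OF ij(1)] by simp
      hence "complex_of_real (sqrt (s i)) * complex_of_real (sqrt (s j)) = complex_of_real (s j)"
        using True by (metis of_real_mult)
      thus ?thesis using True s_eq[of j, symmetric] s_pos[OF ij(2)] ij by simp
    qed (use orth[OF ij(2,1)] ij in simp)
    finally show "(mat_adjoint U * U) $$ (i,j) = 1\<^sub>m n $$ (i,j)" .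
  qed (use U in auto)
  thus ?thesis using U unfolding U_def unitary_mat_def by auto
qed

lemma unitary_mat_with_first_col:
  assumes v: "v \<in> carrier_vec n" and v0: "v \<noteq> 0\<^sub>v n"
  obtains U c where "unitary_mat n U" and "\<forall>i<n. U $$ (i,0) = c * v $ i"
proof -
  interpret cof_vec_space n "TYPE(complex)" .
  define b where "b = basis_completion v"
  define ws where "ws = gram_schmidt n b"
  define W where "W = mat_of_cols n ws"
  from basis_completion[OF v v0, folded b_def]
  have dist_b: "distinct b" and indep: "\<not> lin_dep (set b)" and b: "set b \<subseteq> carrier_vec n"
    and hdb: "hd b = v" and len_b: "length b = n" by auto
  have n: "n \<noteq> 0" using v v0 by (auto intro: eq_vecI)
  from hdb len_b n obtain vs where bv: "b = v # vs" by (cases b) auto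
  from gram_schmidt_result[OF b dist_b indep refl, folded ws_def]
  have ws: "set ws \<subseteq> carrier_vec n" "corthogonal ws" "length ws = n" by (auto simp: len_b)
  from gram_schmidt_hd[OF v, of vs, folded bv] have "hd ws = v" unfolding ws_def .
  hence ws0: "ws ! 0 = v" using ws(3) n by (cases ws) auto
  have W: "W \<in> carrier_mat n n" using ws unfolding W_def by auto
  have Wij: "\<And>i j. i < n \<Longrightarrow> j < n \<Longrightarrow> W $$ (i,j) = ws ! j $ i"
    unfolding W_def using ws by (simp add: mat_of_cols_index)
  have orth: "(\<Sum>k<n. W $$ (k,i) * cnj (W $$ (k,j))) = 0 \<longleftrightarrow> i \<noteq> j" if ij: "i < n" "j < n" for i j
  proof -
    have "ws ! i \<in> carrier_vec n" "ws ! j \<in> carrier_vec n" using ws ij by auto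
    hence "ws ! i \<bullet>c ws ! j = (\<Sum>k<n. W $$ (k,i) * cnj (W $$ (k,j)))"
      using ij by (simp add: scalar_prod_def Wij lessThan_atLeast0)
    with corthogonalD[OF ws(2), of i j] ws(3) ij show ?thesis by auto
  qed
  define s where "s j = (\<Sum>k<n. (cmod (W $$ (k,j)))\<^sup>2)" for j
  have "unitary_mat n (Matrix.mat n n (\<lambda>(i,j). W $$ (i,j) / complex_of_real (sqrt (s j))))"
    unfolding s_def by (rule unitary_mat_normalize_cols[OF W orth])
  moreover have "\<forall>i<n. Matrix.mat n n (\<lambda>(i,j). W $$ (i,j) / complex_of_real (sqrt (s j))) $$ (i,0)
      = (1 / complex_of_real (sqrt (s 0))) * v $ i"
    using n by (simp add: Wij ws0)
  ultimately show ?thesis using that by blast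
qed

lemma mat_eigenvector_exists:
  fixes A :: "complex mat"
  assumes A: "A \<in> carrier_mat (Suc m) (Suc m)"
  obtains e v where "v \<in> carrier_vec (Suc m)" and "v \<noteq> 0\<^sub>v (Suc m)" and "A *\<^sub>v v = e \<cdot>\<^sub>v v"
proof -
  have "degree (char_poly A) = Suc m" using degree_monic_char_poly[OF A] by auto
  hence "\<not> constant (poly (char_poly A))" unfolding constant_degree by auto
  then obtain e where "poly (char_poly A) e = 0" using fundamental_theorem_of_algebra by auto
  hence "eigenvalue A e" using eigenvalue_root_char_poly[OF A] by auto
  thus ?thesis using that A unfolding eigenvalue_def eigenvector_def by auto
qed

lemma unitary_mat_eigenvector_first_col:
  assumes uW: "unitary_mat n W" and A: "A \<in> carrier_mat n n" and v: "v \<in> carrier_vec n"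
    and Av: "A *\<^sub>v v = e \<cdot>\<^sub>v v" and W0: "\<forall>i<n. W $$ (i,0) = c * v $ i" and i: "i < n"
  shows "(mat_adjoint W * (A * W)) $$ (i,0) = (if i = 0 then e else 0)"
proof -
  have W: "W \<in> carrier_mat n n" using uW unitary_mat_carrier by auto
  have n0: "0 < n" using i by simp
  have AW0: "(A * W) $$ (k,0) = e * W $$ (k,0)" if k: "k < n" for k
  proof -
    have "(A * W) $$ (k,0) = (\<Sum>j<n. A $$ (k,j) * (c * v $ j))"
      using A W k n0 W0 by (simp add: index_mult_mat_carrier[of _ n n _ n])
    also have "\<dots> = c * (\<Sum>j<n. A $$ (k,j) * v $ j)"
      by (simp add: sum_distrib_left algebra_simps)
    also have "(\<Sum>j<n. A $$ (k,j) * v $ j) = (A *\<^sub>v v) $ k"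
      using A v k by (simp add: scalar_prod_def lessThan_atLeast0)
    also have "\<dots> = e * v $ k" using Av v k by simp
    finally show ?thesis using W0 k by simp
  qed
  have "(mat_adjoint W * (A * W)) $$ (i,0) = (\<Sum>k<n. mat_adjoint W $$ (i,k) * (A * W) $$ (k,0))"
    by (rule index_mult_mat_carrier) (use A W i n0 in auto)
  also have "\<dots> = (\<Sum>k<n. cnj (W $$ (k,i)) * (e * W $$ (k,0)))"
    using W i by (intro sum.cong refl) (simp add: AW0)
  also have "\<dots> = e * (\<Sum>k<n. cnj (W $$ (k,i)) * W $$ (k,0))"
    by (simp add: sum_distrib_left mult.commute mult.left_commute)
  finally show ?thesis using unitary_mat_cols_orthonormal[OF uW i n0] by simp
qed

lemma mat_adjoint_conj_hermitian:
  fixes A W :: "complex mat"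
  assumes A: "A \<in> carrier_mat n n" and hA: "mat_adjoint A = A" and W: "W \<in> carrier_mat n n"
  shows "mat_adjoint (mat_adjoint W * (A * W)) = mat_adjoint W * (A * W)"
proof -
  have "mat_adjoint (mat_adjoint W * (A * W)) = mat_adjoint (A * W) * W"
    using A W by (simp add: mat_adjoint_mult[of _ n n _ n])
  also have "\<dots> = mat_adjoint W * A * W" using A W hA by (simp add: mat_adjoint_mult[of _ n n _ n])
  also have "\<dots> = mat_adjoint W * (A * W)" using A W by (simp add: assoc_mult_mat[of _ n n _ n _ n])
  finally show ?thesis .
qed

text \<open>A Hermitian matrix is unitarily similar to one whose first row and column vanish
  off the diagonal: take a normalised eigenvector as first column.\<close>

lemma hermitian_mat_deflation:
  assumes A: "A \<in> carrier_mat (Suc m) (Suc m)" and hA: "mat_adjoint A = A"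
  obtains W e where "unitary_mat (Suc m) W"
    and "mat_adjoint (mat_adjoint W * (A * W)) = mat_adjoint W * (A * W)"
    and "\<forall>i<Suc m. (mat_adjoint W * (A * W)) $$ (i,0) = (if i = 0 then complex_of_real e else 0)"
    and "\<forall>j<Suc m. (mat_adjoint W * (A * W)) $$ (0,j) = (if j = 0 then complex_of_real e else 0)"
proof -
  obtain e v where v: "v \<in> carrier_vec (Suc m)" and v0: "v \<noteq> 0\<^sub>v (Suc m)" and Av: "A *\<^sub>v v = e \<cdot>\<^sub>v v"
    using mat_eigenvector_exists[OF A] .
  obtain W c where uW: "unitary_mat (Suc m) W" and W0: "\<forall>i<Suc m. W $$ (i,0) = c * v $ i"
    using unitary_mat_with_first_col[OF v v0] .
  define B where "B = mat_adjoint W * (A * W)"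
  have B: "B \<in> carrier_mat (Suc m) (Suc m)" unfolding B_def using A uW unitary_mat_carrier by simp
  have hB: "mat_adjoint B = B"
    unfolding B_def by (rule mat_adjoint_conj_hermitian[OF A hA unitary_mat_carrier[OF uW]])
  have B0: "B $$ (i,0) = (if i = 0 then e else 0)" if "i < Suc m" for i
    unfolding B_def by (rule unitary_mat_eigenvector_first_col[OF uW A v Av W0 that])
  have Bherm: "B $$ (i,j) = cnj (B $$ (j,i))" if "i < Suc m" "j < Suc m" for i j
    using arg_cong[OF hB, of "\<lambda>M. M $$ (i,j)"] B that by simp
  have "e = cnj e" using Bherm[of 0 0] B0[of 0] by simp
  hence "Im e = 0" by (metis cnj.sel(2) neg_equal_zero)
  hence e: "e = complex_of_real (Re e)" by (simp add: complex_eq_iff)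
  have B0j: "B $$ (0,j) = (if j = 0 then e else 0)" if "j < Suc m" for j
    using Bherm[OF _ that, of 0] B0[OF that] B0[of 0] by auto
  show ?thesis
  proof (rule that[of W "Re e"])
    show "\<forall>i<Suc m. (mat_adjoint W * (A * W)) $$ (i,0) = (if i = 0 then complex_of_real (Re e) else 0)"
      using B0 e unfolding B_def by simp
    show "\<forall>j<Suc m. (mat_adjoint W * (A * W)) $$ (0,j) = (if j = 0 then complex_of_real (Re e) else 0)"
      using B0j e unfolding B_def by simp
  qed (use uW hB in \<open>simp_all add: B_def\<close>)
qed

definition one_block :: "nat \<Rightarrow> complex mat \<Rightarrow> complex mat" where
  "one_block m U = Matrix.mat (Suc m) (Suc m)
     (\<lambda>(i,j). if i = 0 \<and> j = 0 then 1 else if i = 0 \<or> j = 0 then 0 else U $$ (i - 1, j - 1))"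

lemma one_block_carrier[simp]: "one_block m U \<in> carrier_mat (Suc m) (Suc m)"
  unfolding one_block_def by auto

lemma dim_one_block[simp]: "dim_row (one_block m U) = Suc m" "dim_col (one_block m U) = Suc m"
  unfolding one_block_def by auto

lemma unitary_mat_one_block:
  assumes uU: "unitary_mat m U"
  shows "unitary_mat (Suc m) (one_block m U)"
proof -
  define V where "V = one_block m U"
  have "mat_adjoint V * V = 1\<^sub>m (Suc m)"
  proof (rule eq_matI)
    fix i j assume "i < dim_row (1\<^sub>m (Suc m))" "j < dim_col (1\<^sub>m (Suc m))"
    hence ij: "i < Suc m" "j < Suc m" by auto
    have "(mat_adjoint V * V) $$ (i,j) = (\<Sum>k<Suc m. cnj (V $$ (k,i)) * V $$ (k,j))"
      using ij unfolding V_def by (simp add: index_mult_mat_carrier[of _ "Suc m" "Suc m" _ "Suc m"])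
    also have "\<dots> = 1\<^sub>m (Suc m) $$ (i,j)"
    proof (cases "i = 0 \<or> j = 0")
      case True
      thus ?thesis using ij unfolding sum.lessThan_Suc_shift V_def one_block_def by auto
    next
      case False
      then obtain i' j' where i: "i = Suc i'" and j: "j = Suc j'" by (metis not0_implies_Suc)
      have "(\<Sum>k<m. cnj (V $$ (Suc k,i)) * V $$ (Suc k,j)) = (\<Sum>k<m. cnj (U $$ (k,i')) * U $$ (k,j'))"
        using ij unfolding i j V_def one_block_def by (intro sum.cong) auto
      also have "\<dots> = (if i' = j' then 1 else 0)"
        using unitary_mat_cols_orthonormal[OF uU, of i' j'] ij unfolding i j by auto
      finally show ?thesis using ij unfolding i j sum.lessThan_Suc_shift V_def one_block_def by auto
    qed
    finally show "(mat_adjoint V * V) $$ (i,j) = 1\<^sub>m (Suc m) $$ (i,j)" .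
  qed (auto simp: V_def)
  thus ?thesis unfolding V_def unitary_mat_def by auto
qed

lemma one_block_diag:
  assumes U: "U \<in> carrier_mat m m" and B: "B \<in> carrier_mat (Suc m) (Suc m)"
    and col0: "\<forall>i<Suc m. B $$ (i,0) = (if i = 0 then complex_of_real e else 0)"
    and row0: "\<forall>j<Suc m. B $$ (0,j) = (if j = 0 then complex_of_real e else 0)"
    and low: "Matrix.mat m m (\<lambda>(i,j). B $$ (Suc i, Suc j)) = U * dg m f * mat_adjoint U"
  shows "B = one_block m U * dg (Suc m) (\<lambda>i. if i = 0 then e else f (i - 1)) * mat_adjoint (one_block m U)"
    (is "B = ?V * dg (Suc m) ?f * mat_adjoint ?V")
proof (rule eq_matI)
  fix i j assume "i < dim_row (?V * dg (Suc m) ?f * mat_adjoint ?V)"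
    "j < dim_col (?V * dg (Suc m) ?f * mat_adjoint ?V)"
  hence ij: "i < Suc m" "j < Suc m" by auto
  have "(?V * dg (Suc m) ?f * mat_adjoint ?V) $$ (i,j)
      = (\<Sum>k<Suc m. ?V $$ (i,k) * complex_of_real (?f k) * mat_adjoint ?V $$ (k,j))"
    by (rule index_mult_diag_mult) (use ij in auto)
  also have "\<dots> = (\<Sum>k<Suc m. ?V $$ (i,k) * complex_of_real (?f k) * cnj (?V $$ (j,k)))"
    using ij by (intro sum.cong refl) simp
  also have "\<dots> = B $$ (i,j)"
  proof (cases "i = 0 \<or> j = 0")
    case True
    thus ?thesis using ij col0 row0 unfolding sum.lessThan_Suc_shift one_block_def by auto
  next
    case False
    then obtain i' j' where i: "i = Suc i'" and j: "j = Suc j'" by (metis not0_implies_Suc)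
    have "(\<Sum>k<m. ?V $$ (i,Suc k) * complex_of_real (?f (Suc k)) * cnj (?V $$ (j,Suc k)))
        = (\<Sum>k<m. U $$ (i',k) * complex_of_real (f k) * mat_adjoint U $$ (k,j'))"
      using ij U unfolding i j one_block_def by (intro sum.cong) auto
    also have "\<dots> = (U * dg m f * mat_adjoint U) $$ (i',j')"
      by (rule index_mult_diag_mult[symmetric]) (use ij U in \<open>auto simp: i j\<close>)
    also have "\<dots> = B $$ (i,j)" using ij unfolding i j low[symmetric] by simp
    finally show ?thesis using ij unfolding i j sum.lessThan_Suc_shift one_block_def by auto
  qed
  finally show "B $$ (i,j) = (?V * dg (Suc m) ?f * mat_adjoint ?V) $$ (i,j)" by simp
qed (use B in auto)

lemma hermitian_mat_spectral:
  "A \<in> carrier_mat n n \<Longrightarrow> mat_adjoint A = A \<Longrightarrow>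
   \<exists>U f. unitary_mat n U \<and> A = U * dg n f * mat_adjoint U"
proof (induction n arbitrary: A)
  case 0
  have "unitary_mat 0 (1\<^sub>m 0)" unfolding unitary_mat_def by (auto intro: eq_matI)
  moreover have "A = 1\<^sub>m 0 * dg 0 (\<lambda>i. 0) * mat_adjoint (1\<^sub>m 0)"
    by (rule eq_matI) (use 0 in auto)
  ultimately show ?case by (intro exI[of _ "1\<^sub>m 0"] exI[of _ "\<lambda>i. 0"]) auto
next
  case (Suc m A)
  obtain W e where uW: "unitary_mat (Suc m) W"
    and hB: "mat_adjoint (mat_adjoint W * (A * W)) = mat_adjoint W * (A * W)"
    and col0: "\<forall>i<Suc m. (mat_adjoint W * (A * W)) $$ (i,0) = (if i = 0 then complex_of_real e else 0)"
    and row0: "\<forall>j<Suc m. (mat_adjoint W * (A * W)) $$ (0,j) = (if j = 0 then complex_of_real e else 0)"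
    using hermitian_mat_deflation[OF Suc.prems] by blast
  define B where "B = mat_adjoint W * (A * W)"
  have W: "W \<in> carrier_mat (Suc m) (Suc m)" using uW unitary_mat_carrier by auto
  have B: "B \<in> carrier_mat (Suc m) (Suc m)" unfolding B_def using W Suc.prems(1) by simp
  define A' where "A' = Matrix.mat m m (\<lambda>(i,j). B $$ (Suc i, Suc j))"
  have "cnj (B $$ (j,i)) = B $$ (i,j)" if "i < Suc m" "j < Suc m" for i j
    using arg_cong[OF hB[folded B_def], of "\<lambda>M. M $$ (i,j)"] B that by simp
  hence "mat_adjoint A' = A'" unfolding A'_def by (intro eq_matI) auto
  then obtain U f where uU: "unitary_mat m U" and A': "A' = U * dg m f * mat_adjoint U"
    using Suc.IH[of A'] unfolding A'_def by auto
  define V where "V = one_block m U"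
  have B_eq: "B = V * dg (Suc m) (\<lambda>i. if i = 0 then e else f (i - 1)) * mat_adjoint V"
    unfolding V_def using one_block_diag[OF unitary_mat_carrier[OF uU] B] col0 row0 A'
    unfolding A'_def B_def by blast
  have "W * B * mat_adjoint W = W * (mat_adjoint W * (A * (W * mat_adjoint W)))"
    unfolding B_def using W Suc.prems(1) by (simp add: assoc_mult_mat[of _ "Suc m" "Suc m" _ "Suc m" _ "Suc m"])
  also have "\<dots> = A"
    using unitary_mat_right[OF uW] unitary_mat_cancel(2)[OF uW Suc.prems(1)] Suc.prems(1) by simp
  finally have "A = W * B * mat_adjoint W" ..
  also have "\<dots> = (W * V) * dg (Suc m) (\<lambda>i. if i = 0 then e else f (i - 1)) * mat_adjoint (W * V)"
    using W unfolding B_eq V_def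
    by (simp add: mat_adjoint_mult[of _ "Suc m" "Suc m" _ "Suc m"] assoc_mult_mat[of _ "Suc m" "Suc m" _ "Suc m" _ "Suc m"])
  finally show ?case using unitary_mat_mult[OF uW unitary_mat_one_block[OF uU]] unfolding V_def
    by (intro exI[of _ "W * one_block m U"] exI[of _ "\<lambda>i. if i = 0 then e else f (i - 1)"]) simp
qed


section \<open>Functional calculus and the matrix logarithm\<close>

lemma diag_intertwiner_fun:
  assumes Y: "Y \<in> carrier_mat n n" and comm: "dg n g * Y = Y * dg n f"
  shows "dg n (h \<circ> g) * Y = Y * dg n (h \<circ> f)"
proof (rule eq_matI)
  fix i j assume "i < dim_row (Y * dg n (h \<circ> f))" "j < dim_col (Y * dg n (h \<circ> f))"
  hence ij: "i < n" "j < n" using Y by auto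
  have "complex_of_real (g i) * Y $$ (i,j) = Y $$ (i,j) * complex_of_real (f j)"
    using arg_cong[OF comm, of "\<lambda>M. M $$ (i,j)"] ij Y
    by (simp add: mat_diag_mult_left[OF Y] mat_diag_mult_right[OF Y])
  hence "complex_of_real (h (g i)) * Y $$ (i,j) = Y $$ (i,j) * complex_of_real (h (f j))"
    by (cases "Y $$ (i,j) = 0") (simp_all add: mult.commute)
  thus "(dg n (h \<circ> g) * Y) $$ (i,j) = (Y * dg n (h \<circ> f)) $$ (i,j)"
    using ij Y by (simp add: mat_diag_mult_left[OF Y] mat_diag_mult_right[OF Y])
qed (use Y in auto)

text \<open>A function of a Hermitian matrix does not depend on the chosen diagonalisation: the
  unitary \<open>V\<^sup>* U\<close> intertwines the two diagonal matrices, so it only connects equal eigenvalues.\<close>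

lemma unitary_diag_fun_cong:
  assumes uU: "unitary_mat n U" and uV: "unitary_mat n V"
    and eq: "U * dg n f * mat_adjoint U = V * dg n g * mat_adjoint V"
  shows "U * dg n (h \<circ> f) * mat_adjoint U = V * dg n (h \<circ> g) * mat_adjoint V"
proof -
  have U: "U \<in> carrier_mat n n" and V: "V \<in> carrier_mat n n" using uU uV unitary_mat_carrier by auto
  define Y where "Y = mat_adjoint V * U"
  have Y: "Y \<in> carrier_mat n n" unfolding Y_def using U V by auto
  have uu: "mat_adjoint U * U = 1\<^sub>m n" and vv: "mat_adjoint V * V = 1\<^sub>m n"
    using uU uV unfolding unitary_mat_def by auto
  have "Y * dg n f = mat_adjoint V * (U * dg n f * mat_adjoint U) * U"
  proof -
    have "mat_adjoint V * (U * dg n f * mat_adjoint U) * U = mat_adjoint V * (U * (dg n f * (mat_adjoint U * U)))"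
      using U V by (simp add: assoc_mult_mat[of _ n n _ n _ n])
    also have "\<dots> = Y * dg n f" unfolding Y_def using U V uu by (simp add: assoc_mult_mat[of _ n n _ n _ n])
    finally show ?thesis by simp
  qed
  moreover have "dg n g * Y = mat_adjoint V * (V * dg n g * mat_adjoint V) * U"
  proof -
    have "mat_adjoint V * (V * dg n g * mat_adjoint V) * U = (mat_adjoint V * V) * (dg n g * (mat_adjoint V * U))"
      using U V by (simp add: assoc_mult_mat[of _ n n _ n _ n])
    also have "\<dots> = dg n g * Y" unfolding Y_def using U V vv by simp
    finally show ?thesis by simp
  qed
  ultimately have comm: "dg n (h \<circ> g) * Y = Y * dg n (h \<circ> f)"
    using eq diag_intertwiner_fun[OF Y] by simp
  have VY: "V * Y = U" unfolding Y_def using unitary_mat_cancel(2)[OF uV U] by simp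
  have YU: "Y * mat_adjoint U = mat_adjoint V" unfolding Y_def using U V unitary_mat_right[OF uU]
    by (simp add: assoc_mult_mat[of _ n n _ n _ n])
  have "V * dg n (h \<circ> g) * mat_adjoint V = V * (dg n (h \<circ> g) * (Y * mat_adjoint U))"
    using U V Y by (simp add: YU assoc_mult_mat[of _ n n _ n _ n])
  also have "\<dots> = V * ((dg n (h \<circ> g) * Y) * mat_adjoint U)"
    using U V Y by (simp add: assoc_mult_mat[of _ n n _ n _ n] del: o_apply)
  also have "\<dots> = (V * Y) * dg n (h \<circ> f) * mat_adjoint U"
    unfolding comm using U V Y by (simp add: assoc_mult_mat[of _ n n _ n _ n] del: o_apply)
  finally show ?thesis unfolding VY by simp
qed

lemma mat_log_unitary_diag:
  assumes uU: "unitary_mat n U" and pos: "\<forall>i<n. 0 < f i"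
    and A: "A = U * dg n f * mat_adjoint U"
  shows "mat_log A = U * dg n (\<lambda>i. log 2 (f i)) * mat_adjoint U"
proof -
  have U: "U \<in> carrier_mat n n" using uU unitary_mat_carrier by auto
  have dA: "dim_row A = n" using A U by simp
  define P where "P L = (\<exists>U (f :: nat \<Rightarrow> real).
      unitary_mat (dim_row A) U \<and> (\<forall>i<dim_row A. 0 < f i) \<and>
      A = U * mat_diag (dim_row A) (\<lambda>i. complex_of_real (f i)) * mat_adjoint U \<and>
      L = U * mat_diag (dim_row A) (\<lambda>i. complex_of_real (log 2 (f i))) * mat_adjoint U)" for L
  have ml: "mat_log A = (SOME L. P L)" unfolding mat_log_def P_def by simp
  have "P (U * dg n (\<lambda>i. log 2 (f i)) * mat_adjoint U)"
    unfolding P_def dA using uU pos A by blast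
  hence "P (mat_log A)" unfolding ml by (rule someI)
  then obtain U' f' where uU': "unitary_mat n U'" and A': "A = U' * dg n f' * mat_adjoint U'"
    and L: "mat_log A = U' * dg n (\<lambda>i. log 2 (f' i)) * mat_adjoint U'"
    unfolding P_def dA by blast
  have "U' * dg n ((log 2) \<circ> f') * mat_adjoint U' = U * dg n ((log 2) \<circ> f) * mat_adjoint U"
    by (rule unitary_diag_fun_cong[OF uU' uU]) (use A A' in simp)
  thus ?thesis using L by (simp add: o_def)
qed

lemma mtrace_diag_mult: "M \<in> carrier_mat n n \<Longrightarrow> mtrace (mat_diag n a * M) = (\<Sum>i<n. a i * M $$ (i,i))"
  unfolding mtrace_def by (intro sum.cong) (auto simp del: index_mult_mat_sum)

lemma mtrace_unitary_diag_mult: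
  assumes uX: "unitary_mat n X" and uV: "unitary_mat n V"
  shows "Re (mtrace ((X * dg n a * mat_adjoint X) * (V * dg n b * mat_adjoint V)))
    = (\<Sum>i<n. \<Sum>j<n. a i * (cmod ((mat_adjoint X * V) $$ (i,j)))^2 * b j)"
proof -
  have X: "X \<in> carrier_mat n n" and V: "V \<in> carrier_mat n n" using uX uV unitary_mat_carrier by auto
  define Y where "Y = mat_adjoint X * V"
  have Y: "Y \<in> carrier_mat n n" unfolding Y_def using X V by auto
  have "mtrace ((X * dg n a * mat_adjoint X) * (V * dg n b * mat_adjoint V))
     = mtrace (X * (dg n a * (Y * (dg n b * mat_adjoint V))))"
    unfolding Y_def using X V by (simp add: assoc_mult_mat[of _ n n _ n _ n])
  also have "\<dots> = mtrace ((dg n a * (Y * (dg n b * mat_adjoint V))) * X)"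
    by (rule mtrace_mult_commute[of _ n n]) (use X V Y in auto)
  also have "\<dots> = mtrace (dg n a * (Y * dg n b * mat_adjoint Y))"
    unfolding Y_def using X V by (simp add: assoc_mult_mat[of _ n n _ n _ n] mat_adjoint_mult[of _ n n _ n])
  also have "\<dots> = (\<Sum>i<n. complex_of_real (a i) * (\<Sum>j<n. Y $$ (i,j) * complex_of_real (b j) * cnj (Y $$ (i,j))))"
    using Y by (subst mtrace_diag_mult[of _ n]) (auto simp: index_mult_diag_mult simp del: index_mult_mat_sum)
  also have "\<dots> = (\<Sum>i<n. \<Sum>j<n. complex_of_real (a i * (cmod (Y $$ (i,j)))^2 * b j))"
    by (intro sum.cong refl) (simp add: sum_distrib_left mult_cnj_self algebra_simps)
  finally show ?thesis unfolding Y_def by (simp add: Re_sum)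
qed

lemma mtrace_unitary_diag_mult_same_basis:
  assumes "unitary_mat n V"
  shows "Re (mtrace ((V * dg n a * mat_adjoint V) * (V * dg n b * mat_adjoint V))) = (\<Sum>i<n. a i * b i)"
proof -
  have "mat_adjoint V * V = 1\<^sub>m n" using assms unfolding unitary_mat_def by auto
  hence "Re (mtrace ((V * dg n a * mat_adjoint V) * (V * dg n b * mat_adjoint V)))
      = (\<Sum>i<n. \<Sum>j<n. (if i = j then a i * b j else 0))"
    unfolding mtrace_unitary_diag_mult[OF assms assms] by (intro sum.cong refl) auto
  thus ?thesis by (simp add: sum.delta)
qed

lemma mtrace_mult_mat_log_self:
  assumes "unitary_mat n U" and "\<forall>i<n. 0 < f i"
  shows "Re (mtrace ((U * dg n f * mat_adjoint U) * mat_log (U * dg n f * mat_adjoint U)))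
    = (\<Sum>i<n. f i * log 2 (f i))"
  using mtrace_unitary_diag_mult_same_basis[OF assms(1)] mat_log_unitary_diag[OF assms refl] by simp

lemma rel_entropy_unitary_diag:
  assumes "unitary_mat n X" and "unitary_mat n V" and "\<forall>i<n. 0 < g i" and "\<forall>i<n. 0 < m i"
  shows "rel_entropy (X * dg n g * mat_adjoint X) (V * dg n m * mat_adjoint V)
    = (\<Sum>i<n. g i * log 2 (g i))
      - (\<Sum>i<n. \<Sum>j<n. g i * (cmod ((mat_adjoint X * V) $$ (i,j)))\<^sup>2 * log 2 (m j))"
  using mtrace_unitary_diag_mult[OF assms(1,2)] mtrace_mult_mat_log_self[OF assms(1,3)]
  unfolding rel_entropy_def mat_log_unitary_diag[OF assms(2,4) refl] by simp

section \<open>Eigenvalues\<close>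

lemma prod_mset_linear_factors_inj:
  fixes A B :: "complex multiset"
  shows "prod_mset (image_mset (\<lambda>a. [:-a,1:]) A) = prod_mset (image_mset (\<lambda>a. [:-a,1:]) B) \<Longrightarrow> A = B"
proof (induction A arbitrary: B)
  case empty
  show ?case
  proof (rule ccontr)
    assume "{#} \<noteq> B"
    then obtain b where b: "b \<in># B" by (metis multiset_nonemptyE)
    have "poly (prod_mset (image_mset (\<lambda>a. [:-a,1:]) B)) b = 0"
      using b by (auto simp: poly_prod_mset prod_mset_zero_iff)
    thus False using empty by simp
  qed
next
  case (add a A)
  have "poly (prod_mset (image_mset (\<lambda>a. [:-a,1:]) B)) a = 0"
    using add.prems[symmetric] by (simp add: poly_prod_mset)
  hence aB: "a \<in># B" by (auto simp: poly_prod_mset prod_mset_zero_iff)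
  define B' where "B' = B - {#a#}"
  have B: "B = add_mset a B'" unfolding B'_def using aB by simp
  have "[:-a,1:] * prod_mset (image_mset (\<lambda>a. [:-a,1:]) A) = [:-a,1:] * prod_mset (image_mset (\<lambda>a. [:-a,1:]) B')"
    using add.prems unfolding B by simp
  hence "prod_mset (image_mset (\<lambda>a. [:-a,1:]) A) = prod_mset (image_mset (\<lambda>a. [:-a,1:]) B')"
    by (subst (asm) mult_left_cancel) auto
  from add.IH[OF this] show ?case unfolding B by simp
qed

lemma prod_list_map_upt: "(\<Prod>a\<leftarrow>map g [0..<d]. h a) = (\<Prod>i<d. (h (g i) :: 'b :: comm_monoid_mult))"
  by (induction d) (auto simp: lessThan_Suc mult.commute)

lemma unitary_diag_eigenvalues_perm:
  assumes uU: "unitary_mat d U" and A: "A = U * dg d f * mat_adjoint U"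
    and cp: "char_poly A = (\<Prod>i<d. [:- complex_of_real (lam i), 1:])"
  shows "\<exists>p. bij_betw p {..<d} {..<d} \<and> (\<forall>i<d. f i = lam (p i))"
proof -
  have U: "U \<in> carrier_mat d d" using uU unitary_mat_carrier by auto
  have "similar_mat A (dg d f)"
    unfolding similar_mat_def similar_mat_wit_def Let_def
    using U A uU unitary_mat_right[OF uU] unfolding unitary_mat_def
    by (intro exI[of _ U] exI[of _ "mat_adjoint U"]) auto
  hence "char_poly A = char_poly (dg d f)" by (rule char_poly_similar)
  also have "\<dots> = (\<Prod>a\<leftarrow>diag_mat (dg d f). [:- a, 1:])"
    by (rule char_poly_upper_triangular[of _ d]) (auto simp: upper_triangular_def)
  also have "diag_mat (dg d f) = map (\<lambda>i. complex_of_real (f i)) [0..<d]"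
    by (auto simp: diag_mat_def intro: nth_equalityI)
  finally have "(\<Prod>a\<leftarrow>map (\<lambda>i. complex_of_real (f i)) [0..<d]. [:- a, 1:])
      = (\<Prod>a\<leftarrow>map (\<lambda>i. complex_of_real (lam i)) [0..<d]. [:- a, 1:])"
    using cp by (simp only: prod_list_map_upt)
  hence "mset (map (\<lambda>i. complex_of_real (f i)) [0..<d]) = mset (map (\<lambda>i. complex_of_real (lam i)) [0..<d])"
    by (intro prod_mset_linear_factors_inj) (simp add: prod_mset_prod_list[symmetric] multiset.map_comp)
  from permutation_Ex_bij[OF this] obtain p where bp: "bij_betw p {..<d} {..<d}"
    and eq: "\<forall>i<d. map (\<lambda>i. complex_of_real (f i)) [0..<d] ! i = map (\<lambda>i. complex_of_real (lam i)) [0..<d] ! p i"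
    by auto
  have "\<forall>i<d. p i < d" using bp bij_betwE by blast
  hence "\<forall>i<d. f i = lam (p i)" using eq by simp
  thus ?thesis using bp by auto
qed

lemma pd_mat_imp_psd_mat: "pd_mat d A \<Longrightarrow> psd_mat d A"
  unfolding pd_mat_def psd_mat_def
proof (intro conjI ballI)
  fix v :: "complex vec" assume h: "hermitian_mat d A \<and> (\<forall>v\<in>carrier_vec d. v \<noteq> 0\<^sub>v d \<longrightarrow> 0 < Re (conjugate v \<bullet> (A *\<^sub>v v)))"
    and v: "v \<in> carrier_vec d"
  show "0 \<le> Re (conjugate v \<bullet> (A *\<^sub>v v))"
  proof (cases "v = 0\<^sub>v d")
    case True
    have "A \<in> carrier_mat d d" using h unfolding hermitian_mat_def by auto
    thus ?thesis using True by (simp add: scalar_prod_def)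
  next
    case False thus ?thesis using h v by force
  qed
qed auto

lemma pd_mat_unitary_diag:
  assumes "pd_mat d A"
  shows "\<exists>U f. unitary_mat d U \<and> (\<forall>i<d. 0 < f i) \<and> A = U * dg d f * mat_adjoint U"
proof -
  have A: "A \<in> carrier_mat d d" and hA: "mat_adjoint A = A"
    using assms unfolding pd_mat_def hermitian_mat_def by auto
  from hermitian_mat_spectral[OF A hA] obtain U f where u: "unitary_mat d U" and Aeq: "A = U * dg d f * mat_adjoint U" by auto
  have U: "U \<in> carrier_mat d d" using u unitary_mat_carrier by auto
  have "0 < f i" if i: "i < d" for i
  proof -
    have "complex_of_real (f i) = (mat_adjoint U * A * U) $$ (i,i)"
      using unitary_mat_conj_diag[OF u, of "\<lambda>i. complex_of_real (f i)"] i Aeq by simp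
    also have "\<dots> = conjugate (col U i) \<bullet> (A *\<^sub>v col U i)" by (rule index_adjoint_conj_diag_col[OF U A i])
    finally have "f i = Re (conjugate (col U i) \<bullet> (A *\<^sub>v col U i))" by (metis Re_complex_of_real)
    moreover have "col U i \<in> carrier_vec d" using U by auto
    ultimately show ?thesis using assms unitary_mat_col_nonzero[OF u i] unfolding pd_mat_def by auto
  qed
  thus ?thesis using u Aeq by blast
qed



lemma pd_mat_eigendecomposition:
  assumes "pd_mat d A" and "eigenvalues_desc d A lam"
  obtains U p where "unitary_mat d U" and "bij_betw p {..<d} {..<d}"
    and "A = U * dg d (\<lambda>i. lam (p i)) * mat_adjoint U" and "\<forall>j<d. 0 < lam j"
proof -
  obtain U f where uU: "unitary_mat d U" and pos: "\<forall>i<d. 0 < f i" and A: "A = U * dg d f * mat_adjoint U"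
    using pd_mat_unitary_diag[OF assms(1)] by auto
  have "char_poly A = (\<Prod>i<d. [:- complex_of_real (lam i), 1:])"
    using assms(2) unfolding eigenvalues_desc_def by auto
  then obtain p where p: "bij_betw p {..<d} {..<d}" and f: "\<forall>i<d. f i = lam (p i)"
    using unitary_diag_eigenvalues_perm[OF uU A] by auto
  have "dg d f = dg d (\<lambda>i. lam (p i))" using f by (intro eq_matI) auto
  hence "A = U * dg d (\<lambda>i. lam (p i)) * mat_adjoint U" unfolding A by simp
  moreover have "0 < lam j" if j: "j < d" for j
  proof -
    from j p obtain i where "i < d" "j = p i" using bij_betw_imp_surj_on by blast
    thus ?thesis using pos f by auto
  qed
  ultimately show ?thesis using that uU p by auto
qed

lemma mtrace_mult_mat_log_eigenvalues:
  assumes "pd_mat d A" and "eigenvalues_desc d A lam"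
  shows "Re (mtrace (A * mat_log A)) = (\<Sum>j<d. lam j * log 2 (lam j))"
proof -
  obtain U p where uU: "unitary_mat d U" and p: "bij_betw p {..<d} {..<d}"
    and A: "A = U * dg d (\<lambda>i. lam (p i)) * mat_adjoint U" and pos: "\<forall>j<d. 0 < lam j"
    using pd_mat_eigendecomposition[OF assms] .
  have "\<forall>i<d. 0 < lam (p i)" using pos p bij_betwE by blast
  hence "Re (mtrace (A * mat_log A)) = (\<Sum>i<d. lam (p i) * log 2 (lam (p i)))"
    unfolding A by (rule mtrace_mult_mat_log_self[OF uU])
  also have "\<dots> = (\<Sum>j<d. lam j * log 2 (lam j))"
    by (rule sum.reindex_bij_betw[OF p])
  finally show ?thesis .
qed


section \<open>Doubly stochastic matrices\<close>

definition doubly_stochastic :: "nat \<Rightarrow> (nat \<Rightarrow> nat \<Rightarrow> real) \<Rightarrow> bool" where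
  "doubly_stochastic n D \<longleftrightarrow> (\<forall>i<n. \<forall>j<n. 0 \<le> D i j)
     \<and> (\<forall>i<n. (\<Sum>j<n. D i j) = 1) \<and> (\<forall>j<n. (\<Sum>i<n. D i j) = 1)"

lemma doubly_stochastic_transpose_mult:
  assumes "doubly_stochastic n D" and "doubly_stochastic n Q"
  shows "doubly_stochastic n (\<lambda>k j. \<Sum>i<n. D i k * Q i j)"
  unfolding doubly_stochastic_def
proof (intro conjI allI impI)
  have D: "\<forall>i<n. \<forall>k<n. 0 \<le> D i k" "\<forall>i<n. (\<Sum>k<n. D i k) = 1" "\<forall>k<n. (\<Sum>i<n. D i k) = 1"
    and Q: "\<forall>i<n. \<forall>j<n. 0 \<le> Q i j" "\<forall>i<n. (\<Sum>j<n. Q i j) = 1" "\<forall>j<n. (\<Sum>i<n. Q i j) = 1"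
    using assms unfolding doubly_stochastic_def by auto
  fix k j assume "k < n"
  show "j < n \<Longrightarrow> 0 \<le> (\<Sum>i<n. D i k * Q i j)" using D(1) Q(1) \<open>k < n\<close> by (auto intro!: sum_nonneg)
  have "(\<Sum>j<n. \<Sum>i<n. D i k * Q i j) = (\<Sum>i<n. D i k * (\<Sum>j<n. Q i j))"
    by (subst sum.swap) (simp add: sum_distrib_left)
  thus "(\<Sum>j<n. \<Sum>i<n. D i k * Q i j) = 1" using Q(2) D(3) \<open>k < n\<close> by simp
next
  fix j assume "j < n"
  have "(\<Sum>k<n. \<Sum>i<n. D i k * Q i j) = (\<Sum>i<n. (\<Sum>k<n. D i k) * Q i j)"
    by (subst sum.swap) (simp add: sum_distrib_right)
  thus "(\<Sum>k<n. \<Sum>i<n. D i k * Q i j) = 1"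
    using assms \<open>j < n\<close> unfolding doubly_stochastic_def by simp
qed

lemma sum_sum_mult_transpose:
  fixes D Q :: "nat \<Rightarrow> nat \<Rightarrow> real"
  shows "(\<Sum>i<n. \<Sum>j<n. (\<Sum>k<n. D i k * l k) * Q i j * c j)
    = (\<Sum>k<n. \<Sum>j<n. l k * (\<Sum>i<n. D i k * Q i j) * c j)"
proof -
  have "(\<Sum>i<n. \<Sum>j<n. (\<Sum>k<n. D i k * l k) * Q i j * c j)
      = (\<Sum>i<n. \<Sum>j<n. \<Sum>k<n. l k * (D i k * Q i j) * c j)"
    by (intro sum.cong refl) (simp add: sum_distrib_right mult.assoc mult.left_commute)
  also have "\<dots> = (\<Sum>i<n. \<Sum>k<n. \<Sum>j<n. l k * (D i k * Q i j) * c j)"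
    by (intro sum.cong refl sum.swap)
  also have "\<dots> = (\<Sum>k<n. \<Sum>i<n. \<Sum>j<n. l k * (D i k * Q i j) * c j)"
    by (rule sum.swap)
  also have "\<dots> = (\<Sum>k<n. \<Sum>j<n. \<Sum>i<n. l k * (D i k * Q i j) * c j)"
    by (intro sum.cong refl sum.swap)
  also have "\<dots> = (\<Sum>k<n. \<Sum>j<n. l k * (\<Sum>i<n. D i k * Q i j) * c j)"
    by (simp add: sum_distrib_left sum_distrib_right)
  finally show ?thesis .
qed

lemma unitary_mat_doubly_stochastic:
  "unitary_mat n Y \<Longrightarrow> doubly_stochastic n (\<lambda>i j. (cmod (Y $$ (i,j)))\<^sup>2)"
  unfolding doubly_stochastic_def using unitary_mat_row_norm unitary_mat_col_norm by auto

lemma mult_log2_tangent_le: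
  assumes x: "0 < (x::real)" and m: "0 < m"
  shows "(x - m) / ln 2 \<le> x * log 2 x - x * log 2 m"
proof -
  have "ln (m / x) \<le> m / x - 1" using x m by (intro ln_le_minus_one) auto
  hence "x * ln (m / x) \<le> x * (m / x - 1)" using x by (intro mult_left_mono) auto
  moreover have "x * (m / x - 1) = m - x" using x by (simp add: field_simps)
  ultimately have "x * ln (m / x) \<le> m - x" by simp
  moreover have "ln (m / x) = ln m - ln x" using x m by (simp add: ln_div)
  ultimately have "x - m \<le> x * ln x - x * ln m" by (simp add: algebra_simps)
  hence "(x - m) / ln 2 \<le> (x * ln x - x * ln m) / ln 2" by (intro divide_right_mono) auto
  thus ?thesis by (simp add: log_def diff_divide_distrib)
qed

lemma weighted_mean_mult_log2_le:
  fixes w x :: "'i \<Rightarrow> real"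
  assumes K: "finite K" and w: "\<forall>k\<in>K. 0 \<le> w k" and sw: "(\<Sum>k\<in>K. w k) = 1"
    and x: "\<forall>k\<in>K. 0 < x k"
  shows "0 < (\<Sum>k\<in>K. w k * x k)"
    and "(\<Sum>k\<in>K. w k * x k) * log 2 (\<Sum>k\<in>K. w k * x k) \<le> (\<Sum>k\<in>K. w k * (x k * log 2 (x k)))"
proof -
  obtain k0 where k0: "k0 \<in> K" "w k0 \<noteq> 0"
    using sw by (metis (mono_tags, lifting) sum.neutral zero_neq_one)
  show mpos: "0 < (\<Sum>k\<in>K. w k * x k)"
    by (rule sum_pos2[OF K k0(1)]) (use w x k0 in \<open>auto intro: mult_pos_pos mult_nonneg_nonneg less_imp_le simp: order_le_less\<close>)
  define m where "m = (\<Sum>k\<in>K. w k * x k)"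
  have m: "0 < m" using mpos unfolding m_def .
  have "(\<Sum>k\<in>K. w k * ((x k - m) / ln 2)) \<le> (\<Sum>k\<in>K. w k * (x k * log 2 (x k) - x k * log 2 m))"
    by (intro sum_mono mult_left_mono mult_log2_tangent_le) (use w x m in auto)
  moreover have "(\<Sum>k\<in>K. w k * ((x k - m) / ln 2)) = ((\<Sum>k\<in>K. w k * x k) - m * (\<Sum>k\<in>K. w k)) / ln 2"
    by (simp add: sum_divide_distrib[symmetric] sum_subtractf sum_distrib_left algebra_simps)
  moreover have "(\<Sum>k\<in>K. w k * (x k * log 2 (x k) - x k * log 2 m)) = (\<Sum>k\<in>K. w k * (x k * log 2 (x k))) - (\<Sum>k\<in>K. w k * x k) * log 2 m"
    by (simp add: sum_subtractf sum_distrib_right sum_distrib_left algebra_simps)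
  ultimately show "(\<Sum>k\<in>K. w k * x k) * log 2 (\<Sum>k\<in>K. w k * x k) \<le> (\<Sum>k\<in>K. w k * (x k * log 2 (x k)))"
    using sw m_def by simp
qed

lemma doubly_stochastic_entropy_le:
  assumes "doubly_stochastic n D" and l: "\<forall>k<n. 0 < l k"
  defines "\<nu> i \<equiv> \<Sum>k<n. D i k * l k"
  shows "\<forall>i<n. 0 < \<nu> i" and "(\<Sum>i<n. \<nu> i * log 2 (\<nu> i)) \<le> (\<Sum>k<n. l k * log 2 (l k))"
proof -
  have D: "\<forall>i<n. \<forall>k<n. 0 \<le> D i k" "\<forall>i<n. (\<Sum>k<n. D i k) = 1" "\<forall>k<n. (\<Sum>i<n. D i k) = 1"
    using assms(1) unfolding doubly_stochastic_def by auto
  show "\<forall>i<n. 0 < \<nu> i"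
    unfolding \<nu>_def using weighted_mean_mult_log2_le(1)[of "{..<n}" "D _" l] D l by auto
  have "(\<Sum>i<n. \<nu> i * log 2 (\<nu> i)) \<le> (\<Sum>i<n. \<Sum>k<n. D i k * (l k * log 2 (l k)))"
    unfolding \<nu>_def using weighted_mean_mult_log2_le(2)[of "{..<n}" "D _" l] D l
    by (intro sum_mono) auto
  also have "\<dots> = (\<Sum>k<n. (\<Sum>i<n. D i k) * (l k * log 2 (l k)))"
    by (subst sum.swap) (simp add: sum_distrib_right)
  also have "\<dots> = (\<Sum>k<n. l k * log 2 (l k))" using D(3) by simp
  finally show "(\<Sum>i<n. \<nu> i * log 2 (\<nu> i)) \<le> (\<Sum>k<n. l k * log 2 (l k))" .
qed

text \<open>The rearrangement inequality for doubly stochastic matrices (a form of Birkhoff's theorem),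
  proved by Abel summation.\<close>

lemma sum_mult_decreasing_nonpos:
  fixes a z :: "nat \<Rightarrow> real"
  assumes "\<forall>i j. i \<le> j \<longrightarrow> j < n \<longrightarrow> a j \<le> a i" and "\<forall>k<n. 0 \<le> a k"
    and "\<forall>s<n. (\<Sum>k<Suc s. z k) \<le> 0"
  shows "(\<Sum>k<n. a k * z k) \<le> 0"
  using assms
proof (induction n arbitrary: a)
  case 0 thus ?case by simp
next
  case (Suc n a)
  define a' where "a' k = a k - a n" for k
  have "(\<Sum>k<n. a' k * z k) \<le> 0"
    by (rule Suc.IH) (use Suc.prems in \<open>auto simp: a'_def\<close>)
  moreover have "a n * (\<Sum>k<Suc n. z k) \<le> 0"
    using Suc.prems by (intro mult_nonneg_nonpos) auto
  moreover have "(\<Sum>k<Suc n. a k * z k) = (\<Sum>k<n. a' k * z k) + a n * (\<Sum>k<Suc n. z k)"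
    unfolding a'_def by (simp add: sum_distrib_left sum_subtractf algebra_simps)
  ultimately show ?case by simp
qed

lemma sum_lessThan_if_le: "s < n \<Longrightarrow> (\<Sum>j<n. (if j \<le> s then f j else 0)) = (\<Sum>j<Suc s. f j)"
proof -
  assume s: "s < n"
  have "(\<Sum>j<n. (if j \<le> s then f j else 0)) = (\<Sum>j\<in>{j\<in>{..<n}. j \<le> s}. f j)"
    by (rule sum.inter_filter[symmetric]) simp
  also have "{j\<in>{..<n}. j \<le> s} = {..<Suc s}" using s by auto
  finally show ?thesis .
qed

lemma sum_weighted_decreasing_le:
  fixes b w :: "nat \<Rightarrow> real"
  assumes dec: "\<forall>i j. i \<le> j \<longrightarrow> j < n \<longrightarrow> b j \<le> b i" and s: "s < n"
    and w: "\<forall>j<n. 0 \<le> w j \<and> w j \<le> 1" and sw: "(\<Sum>j<n. w j) = real (Suc s)"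
  shows "(\<Sum>j<n. w j * b j) \<le> (\<Sum>j<Suc s. b j)"
proof -
  define e where "e j = (if j \<le> s then (1::real) else 0)" for j
  have se: "(\<Sum>j<n. e j) = real (Suc s)"
    using sum_lessThan_if_le[OF s, of "\<lambda>_. 1::real"] unfolding e_def by simp
  have sb: "(\<Sum>j<Suc s. b j) = (\<Sum>j<n. e j * b j)"
    using sum_lessThan_if_le[OF s, of b] unfolding e_def by (simp add: if_distrib[of "\<lambda>x. x * _"] cong: if_cong)
  have "(\<Sum>j<n. (w j - e j) * b j) \<le> (\<Sum>j<n. (w j - e j) * b s)"
  proof (rule sum_mono)
    fix j assume j: "j \<in> {..<n}"
    show "(w j - e j) * b j \<le> (w j - e j) * b s"
    proof (cases "j \<le> s")
      case True
      hence "b s \<le> b j" using dec s by auto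
      thus ?thesis using True w j unfolding e_def by (auto intro: mult_left_mono_neg)
    next
      case False
      hence "b j \<le> b s" using dec j by auto
      thus ?thesis using False w j unfolding e_def by (auto intro: mult_left_mono)
    qed
  qed
  also have "\<dots> = 0" using sw se by (simp add: sum_distrib_right[symmetric] sum_subtractf)
  finally show ?thesis unfolding sb by (simp add: algebra_simps sum_subtractf)
qed

lemma doubly_stochastic_partial_sum_le:
  fixes b :: "nat \<Rightarrow> real"
  assumes db: "\<forall>i j. i \<le> j \<longrightarrow> j < n \<longrightarrow> b j \<le> b i"
    and M: "doubly_stochastic n M" and s: "s < n"
  shows "(\<Sum>k<Suc s. (\<Sum>j<n. M k j * b j) - b k) \<le> 0"
proof -
  define w where "w j = (\<Sum>k<Suc s. M k j)" for j
  have w: "\<forall>j<n. 0 \<le> w j \<and> w j \<le> 1"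
  proof (intro allI impI conjI)
    fix j assume j: "j < n"
    show "0 \<le> w j" unfolding w_def using M j s by (intro sum_nonneg) (auto simp: doubly_stochastic_def)
    have "w j \<le> (\<Sum>k<n. M k j)" unfolding w_def using M j s
      by (intro sum_mono2) (auto simp: doubly_stochastic_def)
    thus "w j \<le> 1" using M j unfolding doubly_stochastic_def by simp
  qed
  have sw: "(\<Sum>j<n. w j) = real (Suc s)"
    unfolding w_def using M s unfolding doubly_stochastic_def by (subst sum.swap) simp
  have "(\<Sum>k<Suc s. \<Sum>j<n. M k j * b j) = (\<Sum>j<n. w j * b j)"
    unfolding w_def sum_distrib_right by (rule sum.swap)
  thus ?thesis using sum_weighted_decreasing_le[OF db s w sw] by (simp add: sum_subtractf)
qed

lemma doubly_stochastic_rearrangement: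
  fixes a b :: "nat \<Rightarrow> real"
  assumes da: "\<forall>i j. i \<le> j \<longrightarrow> j < n \<longrightarrow> a j \<le> a i"
    and db: "\<forall>i j. i \<le> j \<longrightarrow> j < n \<longrightarrow> b j \<le> b i"
    and M: "doubly_stochastic n M"
  shows "(\<Sum>k<n. \<Sum>j<n. a k * M k j * b j) \<le> (\<Sum>k<n. a k * b k)"
proof (cases n)
  case 0 thus ?thesis by simp
next
  case (Suc n1)
  define z where "z k = (\<Sum>j<n. M k j * b j) - b k" for k
  define a' where "a' k = a k - a n1" for k
  have "(\<Sum>k<n. \<Sum>j<n. M k j * b j) = (\<Sum>j<n. (\<Sum>k<n. M k j) * b j)"
    unfolding sum_distrib_right by (rule sum.swap)
  also have "\<dots> = (\<Sum>j<n. b j)" using M unfolding doubly_stochastic_def by simp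
  finally have zn: "(\<Sum>k<n. z k) = 0"
    unfolding z_def by (simp add: sum_subtractf)
  have "(\<Sum>k<n. a' k * z k) \<le> 0"
    using doubly_stochastic_partial_sum_le[OF db M] da Suc
    by (intro sum_mult_decreasing_nonpos) (auto simp: a'_def z_def)
  moreover have "(\<Sum>k<n. a k * z k) = (\<Sum>k<n. a' k * z k) + a n1 * (\<Sum>k<n. z k)"
    unfolding a'_def by (simp add: sum_distrib_left sum_subtractf algebra_simps)
  moreover have "(\<Sum>k<n. a k * z k) = (\<Sum>k<n. \<Sum>j<n. a k * M k j * b j) - (\<Sum>k<n. a k * b k)"
    unfolding z_def by (simp add: sum_distrib_left sum_subtractf algebra_simps)
  ultimately show ?thesis using zn by simp
qed

lemma doubly_stochastic_reindex:
  assumes M: "doubly_stochastic n M"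
    and f: "bij_betw f {..<n} {..<n}" and g: "bij_betw g {..<n} {..<n}"
  shows "doubly_stochastic n (\<lambda>p q. M (f p) (g q))"
proof -
  have fl: "p < n \<Longrightarrow> f p < n" and gl: "p < n \<Longrightarrow> g p < n" for p
    using f g bij_betwE by blast+
  have "(\<Sum>q<n. M (f p) (g q)) = (\<Sum>j<n. M (f p) j)" for p
    by (rule sum.reindex_bij_betw[OF g])
  moreover have "(\<Sum>p<n. M (f p) (g q)) = (\<Sum>k<n. M k (g q))" for q
    by (rule sum.reindex_bij_betw[OF f])
  ultimately show ?thesis using M fl gl unfolding doubly_stochastic_def by simp
qed

lemma doubly_stochastic_rearrangement_perm:
  fixes a b :: "nat \<Rightarrow> real"
  assumes da: "\<forall>i j. i \<le> j \<longrightarrow> j < n \<longrightarrow> a j \<le> a i"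
    and db: "\<forall>i j. i \<le> j \<longrightarrow> j < n \<longrightarrow> b j \<le> b i"
    and al: "bij_betw al {..<n} {..<n}" and ga: "bij_betw ga {..<n} {..<n}"
    and M: "doubly_stochastic n M"
  shows "(\<Sum>k<n. \<Sum>j<n. a (al k) * M k j * b (ga j)) \<le> (\<Sum>k<n. a k * b k)"
proof -
  define ia where "ia = inv_into {..<n} al"
  define ig where "ig = inv_into {..<n} ga"
  have ia: "bij_betw ia {..<n} {..<n}" unfolding ia_def by (rule bij_betw_inv_into[OF al])
  have ig: "bij_betw ig {..<n} {..<n}" unfolding ig_def by (rule bij_betw_inv_into[OF ga])
  have al_ia: "p < n \<Longrightarrow> al (ia p) = p" and ga_ig: "p < n \<Longrightarrow> ga (ig p) = p" for p
    unfolding ia_def ig_def using al ga by (simp_all add: bij_betw_inv_into_right)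
  have "(\<Sum>k<n. \<Sum>j<n. a (al k) * M k j * b (ga j))
      = (\<Sum>p<n. \<Sum>q<n. a (al (ia p)) * M (ia p) (ig q) * b (ga (ig q)))"
  proof -
    have "(\<Sum>k<n. \<Sum>j<n. a (al k) * M k j * b (ga j))
        = (\<Sum>p<n. \<Sum>j<n. a (al (ia p)) * M (ia p) j * b (ga j))"
      by (rule sum.reindex_bij_betw[OF ia, symmetric])
    also have "\<dots> = (\<Sum>p<n. \<Sum>q<n. a (al (ia p)) * M (ia p) (ig q) * b (ga (ig q)))"
      by (intro sum.cong refl sum.reindex_bij_betw[OF ig, symmetric])
    finally show ?thesis .
  qed
  also have "\<dots> = (\<Sum>p<n. \<Sum>q<n. a p * M (ia p) (ig q) * b q)"
    by (intro sum.cong refl) (simp add: al_ia ga_ig)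
  also have "\<dots> \<le> (\<Sum>k<n. a k * b k)"
    by (rule doubly_stochastic_rearrangement[OF da db doubly_stochastic_reindex[OF M ia ig]])
  finally show ?thesis .
qed

section \<open>Bistochastic maps\<close>

text \<open>The type of matrices is not a monoid, so finite sums of \<open>n \<times> n\<close> matrices are taken by recursion.\<close>

primrec mat_sum :: "nat \<Rightarrow> nat \<Rightarrow> (nat \<Rightarrow> complex mat) \<Rightarrow> complex mat" where
  "mat_sum n 0 F = 0\<^sub>m n n"
| "mat_sum n (Suc k) F = mat_sum n k F + F k"

lemma mat_sum_carrier: "\<forall>l<k. F l \<in> carrier_mat n n \<Longrightarrow> mat_sum n k F \<in> carrier_mat n n"
  by (induction k) auto

lemma index_mat_sum: "\<forall>l<k. F l \<in> carrier_mat n n \<Longrightarrow> i < n \<Longrightarrow> j < n \<Longrightarrow>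
  mat_sum n k F $$ (i,j) = (\<Sum>l<k. F l $$ (i,j))"
proof (induction k)
  case (Suc k)
  have "mat_sum n k F \<in> carrier_mat n n" using Suc.prems by (intro mat_sum_carrier) auto
  moreover have "F k \<in> carrier_mat n n" using Suc.prems by auto
  ultimately have "dim_row (mat_sum n k F) = n" "dim_col (mat_sum n k F) = n" "dim_row (F k) = n" "dim_col (F k) = n" by auto
  thus ?case using Suc by simp
qed simp

lemma linear_map_on_zero: "linear_map_on d \<Phi> \<Longrightarrow> \<Phi> (0\<^sub>m d d) = 0\<^sub>m d d"
proof -
  assume l: "linear_map_on d \<Phi>"
  have c: "0\<^sub>m d d \<in> carrier_mat d d" by simp
  have "\<Phi> (0\<^sub>m d d) = \<Phi> (0 \<cdot>\<^sub>m 0\<^sub>m d d)" by simp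
  also have "\<dots> = 0 \<cdot>\<^sub>m \<Phi> (0\<^sub>m d d)" using l c unfolding linear_map_on_def by blast
  also have "\<Phi> (0\<^sub>m d d) \<in> carrier_mat d d" using l c unfolding linear_map_on_def by blast
  hence "0 \<cdot>\<^sub>m \<Phi> (0\<^sub>m d d) = 0\<^sub>m d d" by (intro eq_matI) auto
  finally show ?thesis .
qed

lemma linear_map_on_mat_sum: "linear_map_on d \<Phi> \<Longrightarrow> \<forall>l<k. F l \<in> carrier_mat d d \<Longrightarrow>
  \<Phi> (mat_sum d k F) = mat_sum d k (\<lambda>l. \<Phi> (F l))"
proof (induction k)
  case 0 thus ?case by (simp add: linear_map_on_zero)
next
  case (Suc k)
  have "mat_sum d k F \<in> carrier_mat d d" using Suc.prems by (intro mat_sum_carrier) auto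
  thus ?case using Suc unfolding linear_map_on_def by simp
qed

lemma mat_sum_cong: "(\<forall>l<k. F l = G l) \<Longrightarrow> mat_sum n k F = mat_sum n k G"
  by (induction k) auto

lemma tensor_id_one: assumes "M \<in> carrier_mat d d" and "linear_map_on d \<Phi>"
  shows "tensor_id d 1 \<Phi> M = \<Phi> M"
proof -
  have inner: "Matrix.mat d d (\<lambda>(a,b). M $$ (a*1 + i mod 1, b*1 + j mod 1)) = M" for i j
    using assms(1) by (intro eq_matI) auto
  have "\<Phi> M \<in> carrier_mat d d" using assms unfolding linear_map_on_def by auto
  thus ?thesis unfolding tensor_id_def inner by (intro eq_matI) auto
qed

lemma bistochastic_psd_mat: assumes "bistochastic d \<Phi>" "psd_mat d M" shows "psd_mat d (\<Phi> M)"
proof -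
  have M: "M \<in> carrier_mat d d" using assms(2) unfolding psd_mat_def hermitian_mat_def by auto
  have l: "linear_map_on d \<Phi>" using assms(1) unfolding bistochastic_def by auto
  have cp: "\<forall>k M. psd_mat (d*k) M \<longrightarrow> psd_mat (d*k) (tensor_id d k \<Phi> M)"
    using assms(1) unfolding bistochastic_def completely_positive_def by auto
  have "psd_mat (d*1) M" using assms(2) by simp
  hence "psd_mat (d*1) (tensor_id d 1 \<Phi> M)" using cp by blast
  thus ?thesis using tensor_id_one[OF M l] by simp
qed

lemma index_adjoint_conj_mat_sum:
  assumes X: "X \<in> carrier_mat d d" and F: "\<forall>l<K. F l \<in> carrier_mat d d" and i: "i < d"
  shows "(mat_adjoint X * mat_sum d K F * X) $$ (i,i) = (\<Sum>k<K. (mat_adjoint X * F k * X) $$ (i,i))"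
proof -
  have "(mat_adjoint X * mat_sum d K F * X) $$ (i,i) = (\<Sum>a<d. \<Sum>b<d. cnj (X $$ (a,i)) * mat_sum d K F $$ (a,b) * X $$ (b,i))"
    by (rule index_adjoint_conj_diag[OF X mat_sum_carrier[OF F] i])
  also have "\<dots> = (\<Sum>a<d. \<Sum>b<d. \<Sum>k<K. cnj (X $$ (a,i)) * F k $$ (a,b) * X $$ (b,i))"
    using F by (intro sum.cong refl) (simp add: index_mat_sum sum_distrib_left sum_distrib_right)
  also have "\<dots> = (\<Sum>k<K. \<Sum>a<d. \<Sum>b<d. cnj (X $$ (a,i)) * F k $$ (a,b) * X $$ (b,i))"
    by (simp add: sum.swap[of _ "{..<K}"])
  also have "\<dots> = (\<Sum>k<K. (mat_adjoint X * F k * X) $$ (i,i))"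
    using F by (intro sum.cong refl index_adjoint_conj_diag[symmetric, OF X _ i]) auto
  finally show ?thesis .
qed

lemma index_adjoint_conj_smult:
  assumes X: "X \<in> carrier_mat d d" and B: "B \<in> carrier_mat d d" and i: "i < d"
  shows "(mat_adjoint X * (c \<cdot>\<^sub>m B) * X) $$ (i,i) = c * (mat_adjoint X * B * X) $$ (i,i)"
  using X B i by (simp add: index_adjoint_conj_diag sum_distrib_left algebra_simps)

locale bistochastic_frame =
  fixes d :: nat and \<Phi> :: "complex mat \<Rightarrow> complex mat" and W :: "complex mat"
  assumes bs: "bistochastic d \<Phi>" and uW: "unitary_mat d W"
begin

definition proj :: "nat \<Rightarrow> complex mat" where
  "proj k = Matrix.mat d d (\<lambda>(i,j). W $$ (i,k) * cnj (W $$ (j,k)))"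

lemma W_carrier: "W \<in> carrier_mat d d" using uW unitary_mat_carrier by auto

lemma linear: "linear_map_on d \<Phi>" using bs unfolding bistochastic_def by auto

lemma map_carrier: "A \<in> carrier_mat d d \<Longrightarrow> \<Phi> A \<in> carrier_mat d d"
  using linear unfolding linear_map_on_def by auto

lemma proj_carrier[simp]: "proj k \<in> carrier_mat d d" unfolding proj_def by auto

lemma proj_psd: "psd_mat d (proj k)"
  unfolding psd_mat_def hermitian_mat_def
proof (intro conjI ballI)
  show "proj k \<in> carrier_mat d d" by simp
  show "mat_adjoint (proj k) = proj k" by (rule eq_matI) (auto simp: proj_def)
  fix v :: "complex vec" assume v: "v \<in> carrier_vec d"
  define z where "z = (\<Sum>a<d. cnj (v $ a) * W $$ (a,k))"
  have "conjugate v \<bullet> (proj k *\<^sub>v v) = (\<Sum>a<d. \<Sum>b<d. cnj (v $ a) * proj k $$ (a,b) * v $ b)"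
    by (rule quadratic_form_sum[OF proj_carrier v])
  also have "\<dots> = (\<Sum>a<d. \<Sum>b<d. (cnj (v $ a) * W $$ (a,k)) * (cnj (W $$ (b,k)) * v $ b))"
    by (intro sum.cong refl) (simp add: proj_def algebra_simps)
  also have "\<dots> = z * cnj z"
  proof -
    have cz: "cnj z = (\<Sum>b<d. cnj (W $$ (b,k)) * v $ b)" unfolding z_def by (simp add: cnj_sum mult.commute)
    show ?thesis unfolding cz unfolding z_def by (simp add: sum_product)
  qed
  also have "\<dots> = complex_of_real (cmod z ^ 2)" by (simp add: mult_cnj_self)
  finally show "0 \<le> Re (conjugate v \<bullet> (proj k *\<^sub>v v))" by simp
qed

lemma diag_mat_sum_proj: "W * dg d l * mat_adjoint W = mat_sum d d (\<lambda>k. complex_of_real (l k) \<cdot>\<^sub>m proj k)"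
proof (rule eq_matI)
  fix i j assume "i < dim_row (mat_sum d d (\<lambda>k. complex_of_real (l k) \<cdot>\<^sub>m proj k))"
    "j < dim_col (mat_sum d d (\<lambda>k. complex_of_real (l k) \<cdot>\<^sub>m proj k))"
  hence ij: "i < d" "j < d" using mat_sum_carrier[of d "\<lambda>k. complex_of_real (l k) \<cdot>\<^sub>m proj k" d] by auto
  have "(W * dg d l * mat_adjoint W) $$ (i,j) = (\<Sum>k<d. W $$ (i,k) * complex_of_real (l k) * mat_adjoint W $$ (k,j))"
    by (rule index_mult_diag_mult) (use W_carrier ij in auto)
  thus "(W * dg d l * mat_adjoint W) $$ (i,j) = mat_sum d d (\<lambda>k. complex_of_real (l k) \<cdot>\<^sub>m proj k) $$ (i,j)"
    using ij W_carrier by (simp add: index_mat_sum proj_def algebra_simps)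
qed (use W_carrier mat_sum_carrier[of d "\<lambda>k. complex_of_real (l k) \<cdot>\<^sub>m proj k" d] in auto)

lemma one_mat_sum_proj: "1\<^sub>m d = mat_sum d d proj"
proof (rule eq_matI)
  fix i j assume "i < dim_row (mat_sum d d proj)" "j < dim_col (mat_sum d d proj)"
  hence ij: "i < d" "j < d" using mat_sum_carrier[of d proj d] by auto
  show "1\<^sub>m d $$ (i,j) = mat_sum d d proj $$ (i,j)"
    using ij W_carrier unitary_mat_rows_orthonormal[OF uW ij] by (simp add: index_mat_sum proj_def)
qed (use mat_sum_carrier[of d proj d] in auto)

lemma mtrace_proj: "k < d \<Longrightarrow> mtrace (proj k) = 1"
  using unitary_mat_cols_orthonormal[OF uW, of k k] unfolding mtrace_def proj_def by (simp add: mult.commute)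

lemma map_diag_mat_sum_proj: "\<Phi> (W * dg d l * mat_adjoint W) = mat_sum d d (\<lambda>k. complex_of_real (l k) \<cdot>\<^sub>m \<Phi> (proj k))"
proof -
  have "\<Phi> (W * dg d l * mat_adjoint W) = mat_sum d d (\<lambda>k. \<Phi> (complex_of_real (l k) \<cdot>\<^sub>m proj k))"
    unfolding diag_mat_sum_proj by (rule linear_map_on_mat_sum[OF linear]) auto
  also have "\<dots> = mat_sum d d (\<lambda>k. complex_of_real (l k) \<cdot>\<^sub>m \<Phi> (proj k))"
    using linear unfolding linear_map_on_def by (intro mat_sum_cong) auto
  finally show ?thesis .
qed

definition transition :: "complex mat \<Rightarrow> nat \<Rightarrow> nat \<Rightarrow> real" where
  "transition X i k = Re ((mat_adjoint X * \<Phi> (proj k) * X) $$ (i,i))"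

lemma transition_nonneg:
  assumes uX: "unitary_mat d X" and i: "i < d"
  shows "0 \<le> transition X i k"
proof -
  have X: "X \<in> carrier_mat d d" using uX unitary_mat_carrier by auto
  have "psd_mat d (\<Phi> (proj k))" by (rule bistochastic_psd_mat[OF bs proj_psd])
  moreover have "col X i \<in> carrier_vec d" using X by auto
  ultimately have "0 \<le> Re (conjugate (col X i) \<bullet> (\<Phi> (proj k) *\<^sub>v col X i))"
    unfolding psd_mat_def by auto
  thus ?thesis unfolding transition_def using index_adjoint_conj_diag_col[OF X map_carrier[OF proj_carrier] i] by simp
qed

lemma transition_row_sum:
  assumes uX: "unitary_mat d X" and i: "i < d"
  shows "(\<Sum>k<d. transition X i k) = 1"
proof -
  have X: "X \<in> carrier_mat d d" using uX unitary_mat_carrier by auto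
  have "(\<Sum>k<d. (mat_adjoint X * \<Phi> (proj k) * X) $$ (i,i)) = (mat_adjoint X * mat_sum d d (\<lambda>k. \<Phi> (proj k)) * X) $$ (i,i)"
    by (rule index_adjoint_conj_mat_sum[symmetric, OF X _ i]) (auto intro: map_carrier)
  also have "mat_sum d d (\<lambda>k. \<Phi> (proj k)) = \<Phi> (1\<^sub>m d)"
    unfolding one_mat_sum_proj by (rule linear_map_on_mat_sum[OF linear, symmetric]) auto
  also have "\<dots> = 1\<^sub>m d" using bs unfolding bistochastic_def by auto
  also have "(mat_adjoint X * 1\<^sub>m d * X) $$ (i,i) = 1"
    using uX X i unfolding unitary_mat_def by simp
  finally show ?thesis unfolding transition_def by (simp only: Re_sum[symmetric]) simp
qed

lemma transition_col_sum:
  assumes uX: "unitary_mat d X" and k: "k < d"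
  shows "(\<Sum>i<d. transition X i k) = 1"
proof -
  have X: "X \<in> carrier_mat d d" using uX unitary_mat_carrier by auto
  have Pk: "\<Phi> (proj k) \<in> carrier_mat d d" by (rule map_carrier) simp
  have "mtrace (mat_adjoint X * \<Phi> (proj k) * X) = mtrace (X * (mat_adjoint X * \<Phi> (proj k)))"
    by (rule mtrace_mult_commute[of _ d d]) (use X Pk in auto)
  also have "X * (mat_adjoint X * \<Phi> (proj k)) = \<Phi> (proj k)" by (rule unitary_mat_cancel(2)[OF uX Pk])
  also have "mtrace (\<Phi> (proj k)) = mtrace (proj k)" using bs unfolding bistochastic_def by auto
  also have "\<dots> = 1" by (rule mtrace_proj[OF k])
  finally have "mtrace (mat_adjoint X * \<Phi> (proj k) * X) = 1" .
  moreover have dr: "dim_row (mat_adjoint X * \<Phi> (proj k) * X) = d" using X by simp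
  ultimately have "(\<Sum>i<d. (mat_adjoint X * \<Phi> (proj k) * X) $$ (i,i)) = 1"
    unfolding mtrace_def dr by simp
  thus ?thesis unfolding transition_def by (simp only: Re_sum[symmetric]) simp
qed

lemma output_eigenvalue_eq:
  assumes uX: "unitary_mat d X" and eq: "\<Phi> (W * dg d l * mat_adjoint W) = X * dg d \<nu> * mat_adjoint X" and i: "i < d"
  shows "\<nu> i = (\<Sum>k<d. transition X i k * l k)"
proof -
  have X: "X \<in> carrier_mat d d" using uX unitary_mat_carrier by auto
  have "complex_of_real (\<nu> i) = (mat_adjoint X * \<Phi> (W * dg d l * mat_adjoint W) * X) $$ (i,i)"
    using i eq unitary_mat_conj_diag[OF uX] by simp
  also have "\<dots> = (\<Sum>k<d. (mat_adjoint X * (complex_of_real (l k) \<cdot>\<^sub>m \<Phi> (proj k)) * X) $$ (i,i))"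
    unfolding map_diag_mat_sum_proj by (rule index_adjoint_conj_mat_sum[OF X _ i]) (auto intro!: smult_carrier_mat map_carrier)
  also have "\<dots> = (\<Sum>k<d. complex_of_real (l k) * (mat_adjoint X * \<Phi> (proj k) * X) $$ (i,i))"
    by (intro sum.cong refl index_adjoint_conj_smult[OF X _ i] map_carrier) simp
  finally have "\<nu> i = Re (\<Sum>k<d. complex_of_real (l k) * (mat_adjoint X * \<Phi> (proj k) * X) $$ (i,i))"
    by (metis Re_complex_of_real)
  thus ?thesis unfolding transition_def by (simp add: Re_sum mult.commute)
qed

lemma transition_doubly_stochastic:
  "unitary_mat d X \<Longrightarrow> doubly_stochastic d (transition X)"
  unfolding doubly_stochastic_def using transition_nonneg transition_row_sum transition_col_sum by auto

end

text \<open>The eigenvalues of the output of a bistochastic map are obtained from those of the input by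
  a doubly stochastic matrix: its entries are \<open>\<langle>x\<^sub>i, \<Phi>(w\<^sub>k w\<^sub>k\<^sup>*) x\<^sub>i\<rangle>\<close>, for the eigenbases
  \<open>w\<close> of the input and \<open>x\<close> of the output; positivity, unitality and trace preservation of
  \<open>\<Phi>\<close> give nonnegativity, row sums and column sums.\<close>

lemma bistochastic_diag_doubly_stochastic:
  assumes "bistochastic d \<Phi>" and "unitary_mat d W" and "unitary_mat d X"
    and "\<Phi> (W * dg d l * mat_adjoint W) = X * dg d \<nu> * mat_adjoint X"
  obtains D where "doubly_stochastic d D" and "\<forall>i<d. \<nu> i = (\<Sum>k<d. D i k * l k)"
proof -
  interpret bistochastic_frame d \<Phi> W using assms(1,2) by unfold_locales
  show ?thesis
    using that[of "transition X"] transition_doubly_stochastic[OF assms(3)]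
      output_eigenvalue_eq[OF assms(3,4)] by blast
qed



section \<open>The upper bound\<close>

lemma bij_betw_reverse_lessThan: "bij_betw (\<lambda>t. d - 1 - t) {..<d} {..<(d::nat)}"
  by (rule bij_betwI[where g = "\<lambda>t. d - 1 - t"]) auto

lemma doubly_stochastic_neg_log_rearrangement:
  fixes lam mu :: "nat \<Rightarrow> real"
  assumes M: "doubly_stochastic d M"
    and al: "bij_betw al {..<d} {..<d}" and be: "bij_betw be {..<d} {..<d}"
    and dlam: "\<forall>i j. i \<le> j \<longrightarrow> j < d \<longrightarrow> lam j \<le> lam i"
    and dmu: "\<forall>i j. i \<le> j \<longrightarrow> j < d \<longrightarrow> mu j \<le> mu i"
    and mu_pos: "\<forall>j<d. 0 < mu j"
  shows "(\<Sum>k<d. \<Sum>j<d. lam (al k) * M k j * - log 2 (mu (be j)))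
    \<le> - (\<Sum>j<d. lam j * log 2 (mu (d - 1 - j)))"
proof -
  define b where "b t = - log 2 (mu (d - 1 - t))" for t
  define ga where "ga j = d - 1 - be j" for j
  have ga: "bij_betw ga {..<d} {..<d}"
    unfolding ga_def using bij_betw_trans[OF be bij_betw_reverse_lessThan[of d]] by (simp add: o_def)
  have db: "\<forall>i j. i \<le> j \<longrightarrow> j < d \<longrightarrow> b j \<le> b i"
  proof (intro allI impI)
    fix i j assume ij: "i \<le> j" "j < d"
    have "mu (d - 1 - i) \<le> mu (d - 1 - j)" using dmu ij by auto
    hence "log 2 (mu (d - 1 - i)) \<le> log 2 (mu (d - 1 - j))" using mu_pos ij by (intro log_mono) auto
    thus "b j \<le> b i" unfolding b_def by simp
  qed
  have bga: "b (ga j) = - log 2 (mu (be j))" if j: "j < d" for j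
  proof -
    have "be j < d" using be j bij_betwE by blast
    hence "d - 1 - ga j = be j" unfolding ga_def by auto
    thus ?thesis unfolding b_def by simp
  qed
  have "(\<Sum>k<d. \<Sum>j<d. lam (al k) * M k j * - log 2 (mu (be j)))
      = (\<Sum>k<d. \<Sum>j<d. lam (al k) * M k j * b (ga j))"
    using bga by (intro sum.cong refl) auto
  also have "\<dots> \<le> (\<Sum>k<d. lam k * b k)"
    by (rule doubly_stochastic_rearrangement_perm[OF dlam db al ga M])
  also have "\<dots> = - (\<Sum>j<d. lam j * log 2 (mu (d - 1 - j)))"
    unfolding b_def by (simp add: sum_negf)
  finally show ?thesis .
qed

lemma rel_entropy_bistochastic_le:
  assumes \<Phi>: "bistochastic d \<Phi>" and \<rho>: "pd_mat d \<rho>" and \<sigma>: "pd_mat d \<sigma>"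
    and lam: "eigenvalues_desc d \<rho> lam" and mu: "eigenvalues_desc d \<sigma> mu"
  shows "rel_entropy (\<Phi> \<rho>) \<sigma> \<le> Re (mtrace (\<rho> * mat_log \<rho>)) - (\<Sum>j<d. lam j * log 2 (mu (d - 1 - j)))"
proof -
  obtain W al where uW: "unitary_mat d W" and al: "bij_betw al {..<d} {..<d}"
    and \<rho>_eq: "\<rho> = W * dg d (\<lambda>k. lam (al k)) * mat_adjoint W" and lam_pos: "\<forall>j<d. 0 < lam j"
    using pd_mat_eigendecomposition[OF \<rho> lam] .
  obtain V be where uV: "unitary_mat d V" and be: "bij_betw be {..<d} {..<d}"
    and \<sigma>_eq: "\<sigma> = V * dg d (\<lambda>j. mu (be j)) * mat_adjoint V" and mu_pos: "\<forall>j<d. 0 < mu j"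
    using pd_mat_eigendecomposition[OF \<sigma> mu] .
  have dlam: "\<forall>i j. i \<le> j \<longrightarrow> j < d \<longrightarrow> lam j \<le> lam i"
    and dmu: "\<forall>i j. i \<le> j \<longrightarrow> j < d \<longrightarrow> mu j \<le> mu i"
    using lam mu unfolding eigenvalues_desc_def by auto
  define l where "l k = lam (al k)" for k
  define m where "m j = mu (be j)" for j
  have l_pos: "\<forall>k<d. 0 < l k" and m_pos: "\<forall>j<d. 0 < m j"
    unfolding l_def m_def using lam_pos mu_pos al be bij_betwE by blast+
  have "psd_mat d (\<Phi> \<rho>)" by (rule bistochastic_psd_mat[OF \<Phi> pd_mat_imp_psd_mat[OF \<rho>]])
  then obtain X \<nu> where uX: "unitary_mat d X" and out: "\<Phi> \<rho> = X * dg d \<nu> * mat_adjoint X"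
    using hermitian_mat_spectral[of "\<Phi> \<rho>" d] unfolding psd_mat_def hermitian_mat_def by auto
  obtain D where D: "doubly_stochastic d D" and \<nu>: "\<forall>i<d. \<nu> i = (\<Sum>k<d. D i k * l k)"
    using bistochastic_diag_doubly_stochastic[OF \<Phi> uW uX, of l \<nu>] out \<rho>_eq unfolding l_def by auto
  have \<nu>_pos: "\<forall>i<d. 0 < \<nu> i" and entropy: "(\<Sum>i<d. \<nu> i * log 2 (\<nu> i)) \<le> (\<Sum>k<d. l k * log 2 (l k))"
    using doubly_stochastic_entropy_le[OF D l_pos] \<nu> by simp_all
  define Q where "Q i j = (cmod ((mat_adjoint X * V) $$ (i,j)))\<^sup>2" for i j
  define M where "M k j = (\<Sum>i<d. D i k * Q i j)" for k j
  have M: "doubly_stochastic d M"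
    unfolding M_def Q_def by (intro doubly_stochastic_transpose_mult[OF D] unitary_mat_doubly_stochastic
      unitary_mat_mult[OF unitary_mat_adjoint[OF uX] uV])
  have "(\<Sum>i<d. \<Sum>j<d. \<nu> i * Q i j * - log 2 (m j))
      = (\<Sum>i<d. \<Sum>j<d. (\<Sum>k<d. D i k * l k) * Q i j * - log 2 (m j))"
    using \<nu> by simp
  also have "\<dots> = (\<Sum>k<d. \<Sum>j<d. lam (al k) * M k j * - log 2 (mu (be j)))"
    unfolding M_def l_def m_def by (rule sum_sum_mult_transpose)
  finally have cross: "- (\<Sum>i<d. \<Sum>j<d. \<nu> i * Q i j * log 2 (m j))
      = (\<Sum>k<d. \<Sum>j<d. lam (al k) * M k j * - log 2 (mu (be j)))"
    by (simp add: sum_negf)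
  have "rel_entropy (\<Phi> \<rho>) \<sigma> = (\<Sum>i<d. \<nu> i * log 2 (\<nu> i)) - (\<Sum>i<d. \<Sum>j<d. \<nu> i * Q i j * log 2 (m j))"
    unfolding out \<sigma>_eq m_def Q_def using rel_entropy_unitary_diag[OF uX uV \<nu>_pos] m_pos
    unfolding m_def by simp
  also have "\<dots> \<le> (\<Sum>k<d. l k * log 2 (l k)) - (\<Sum>j<d. lam j * log 2 (mu (d - 1 - j)))"
    using entropy cross doubly_stochastic_neg_log_rearrangement[OF M al be dlam dmu mu_pos] by linarith
  also have "(\<Sum>k<d. l k * log 2 (l k)) = Re (mtrace (\<rho> * mat_log \<rho>))"
    unfolding l_def mtrace_mult_mat_log_eigenvalues[OF \<rho> lam] by (rule sum.reindex_bij_betw[OF al])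
  finally show ?thesis .
qed


section \<open>Unitary conjugations are bistochastic\<close>

lemma sum_if_cond_const: "(\<Sum>b\<in>B. if P then f b else 0) = (if P then (\<Sum>b\<in>B. f b) else (0::'a::comm_monoid_add))"
  by (cases P) auto

lemma sum_lessThan_mult_split: "(\<Sum>i<d*k. f i) = (\<Sum>q<d. \<Sum>x<k. (f (q*k + x) :: 'a :: comm_monoid_add))"
  for d k :: nat
proof (induction d)
  case (Suc d)
  have "(\<Sum>i<Suc d * k. f i) = (\<Sum>i\<in>{0..<d*k}. f i) + (\<Sum>i\<in>{d*k..<d*k+k}. f i)"
    by (simp add: lessThan_atLeast0 sum.atLeastLessThan_concat add.commute)
  also have "(\<Sum>i\<in>{d*k..<d*k+k}. f i) = (\<Sum>x<k. f (d*k + x))"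
  proof -
    have "(\<Sum>i\<in>{d*k..<d*k+k}. f i) = (\<Sum>i\<in>{0+d*k..<k+d*k}. f i)" by (simp add: add.commute)
    also have "\<dots> = (\<Sum>x\<in>{0..<k}. f (x + d*k))" by (rule sum.shift_bounds_nat_ivl)
    finally show ?thesis by (simp add: lessThan_atLeast0 add.commute)
  qed
  finally show ?case using Suc by (simp add: lessThan_atLeast0 lessThan_Suc)
qed simp

lemma mult_add_less_mult: "(a::nat) < d \<Longrightarrow> x < k \<Longrightarrow> a * k + x < d * k"
proof -
  assume "a < d" "x < k"
  hence "a * k + x < a * k + k" by simp
  also have "\<dots> = Suc a * k" by simp
  also have "\<dots> \<le> d * k" using \<open>a < d\<close> by (intro mult_right_mono) auto
  finally show ?thesis .
qed

lemma quadratic_form_congruence: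
  assumes X: "(X :: complex mat) \<in> carrier_mat n n" and M: "M \<in> carrier_mat n n" and v: "v \<in> carrier_vec n"
  shows "conjugate v \<bullet> ((X * M * mat_adjoint X) *\<^sub>v v) = conjugate (mat_adjoint X *\<^sub>v v) \<bullet> (M *\<^sub>v (mat_adjoint X *\<^sub>v v))"
proof -
  define w where "w = mat_adjoint X *\<^sub>v v"
  have w: "w \<in> carrier_vec n" unfolding w_def using X v by (intro mult_mat_vec_carrier[of _ n n]) auto
  define u where "u = M *\<^sub>v w"
  have u: "u \<in> carrier_vec n" unfolding u_def using M w by (intro mult_mat_vec_carrier[of _ n n]) auto
  have "(X * M * mat_adjoint X) *\<^sub>v v = (X * M) *\<^sub>v w"
    unfolding w_def by (rule assoc_mult_mat_vec) (use X M v in auto)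
  also have "\<dots> = X *\<^sub>v u" unfolding u_def by (rule assoc_mult_mat_vec) (use X M w in auto)
  finally have "(X * M * mat_adjoint X) *\<^sub>v v = X *\<^sub>v u" .
  hence "conjugate v \<bullet> ((X * M * mat_adjoint X) *\<^sub>v v) = (\<Sum>i<n. cnj (v $ i) * (\<Sum>j<n. X $$ (i,j) * u $ j))"
    using X u v by (simp add: scalar_prod_def lessThan_atLeast0 conjugate_vec_def)
  also have "\<dots> = (\<Sum>i<n. \<Sum>j<n. cnj (v $ i) * X $$ (i,j) * u $ j)"
    by (simp add: sum_distrib_left mult.assoc)
  also have "\<dots> = (\<Sum>j<n. \<Sum>i<n. cnj (v $ i) * X $$ (i,j) * u $ j)" by (rule sum.swap)
  also have "\<dots> = (\<Sum>j<n. cnj (w $ j) * u $ j)"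
    unfolding w_def using X v by (intro sum.cong refl) (simp add: scalar_prod_def lessThan_atLeast0 cnj_sum sum_distrib_right sum_distrib_left ac_simps)
  also have "\<dots> = conjugate w \<bullet> u"
    using w u by (simp add: scalar_prod_def lessThan_atLeast0 conjugate_vec_def)
  finally show ?thesis unfolding u_def w_def .
qed

lemma psd_mat_congruence:
  assumes X: "(X :: complex mat) \<in> carrier_mat n n" and M: "psd_mat n M"
  shows "psd_mat n (X * M * mat_adjoint X)"
proof -
  have Mc: "M \<in> carrier_mat n n" and hM: "mat_adjoint M = M" using M unfolding psd_mat_def hermitian_mat_def by auto
  have "mat_adjoint (X * M * mat_adjoint X) = X * M * mat_adjoint X"
    using X Mc hM by (simp add: mat_adjoint_mult[of _ n n _ n] assoc_mult_mat[of _ n n _ n _ n])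
  moreover have "X * M * mat_adjoint X \<in> carrier_mat n n" using X Mc by simp
  moreover have "0 \<le> Re (conjugate v \<bullet> ((X * M * mat_adjoint X) *\<^sub>v v))" if v: "v \<in> carrier_vec n" for v
  proof -
    have "mat_adjoint X *\<^sub>v v \<in> carrier_vec n" using X v by (intro mult_mat_vec_carrier[of _ n n]) auto
    thus ?thesis unfolding quadratic_form_congruence[OF X Mc v] using M unfolding psd_mat_def by auto
  qed
  ultimately show ?thesis unfolding psd_mat_def hermitian_mat_def by auto
qed

lemma index_mult_mult_adjoint: "U \<in> carrier_mat d d \<Longrightarrow> B \<in> carrier_mat d d \<Longrightarrow> p < d \<Longrightarrow> q < d \<Longrightarrow>
  (U * B * mat_adjoint U) $$ (p,q) = (\<Sum>a<d. \<Sum>b<d. U $$ (p,a) * B $$ (a,b) * cnj (U $$ (q,b)))"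
proof -
  assume U: "U \<in> carrier_mat d d" and B: "B \<in> carrier_mat d d" and pq: "p < d" "q < d"
  have "(U * B * mat_adjoint U) $$ (p,q) = (\<Sum>b<d. (\<Sum>a<d. U $$ (p,a) * B $$ (a,b)) * cnj (U $$ (q,b)))"
    using U B pq by simp
  also have "\<dots> = (\<Sum>b<d. \<Sum>a<d. U $$ (p,a) * B $$ (a,b) * cnj (U $$ (q,b)))"
    by (simp add: sum_distrib_right)
  also have "\<dots> = (\<Sum>a<d. \<Sum>b<d. U $$ (p,a) * B $$ (a,b) * cnj (U $$ (q,b)))" by (rule sum.swap)
  finally show ?thesis .
qed

text \<open>The matrix \<open>U \<otimes> 1\<^sub>k\<close> in the basis \<open>e\<^sub>a \<otimes> e\<^sub>x \<mapsto> a * k + x\<close> used by \<open>tensor_id\<close>.\<close>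

definition tensor_one :: "nat \<Rightarrow> nat \<Rightarrow> complex mat \<Rightarrow> complex mat" where
  "tensor_one d k U = Matrix.mat (d * k) (d * k)
     (\<lambda>(i,j). if i mod k = j mod k then U $$ (i div k, j div k) else 0)"

lemma tensor_id_unitary_conj:
  assumes U: "U \<in> carrier_mat d d" and M: "M \<in> carrier_mat (d * k) (d * k)"
  shows "tensor_id d k (\<lambda>A. U * A * mat_adjoint U) M = tensor_one d k U * M * mat_adjoint (tensor_one d k U)"
proof -
  define n where "n = d * k"
  define Ut where "Ut = tensor_one d k U"
  have Mc: "M \<in> carrier_mat n n" using M unfolding n_def .
  have Ut: "Ut \<in> carrier_mat n n" unfolding Ut_def tensor_one_def n_def by auto
  have kpos: "0 < k" if "i < n" for i using that unfolding n_def by (cases k) auto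
  have divl: "i div k < d" if "i < n" for i using that unfolding n_def
    by (metis less_mult_imp_div_less)
  have modl: "i mod k < k" if "i < n" for i using kpos[OF that] by simp
  have "tensor_id d k (\<lambda>A. U * A * mat_adjoint U) M = Ut * M * mat_adjoint Ut"
  proof (rule eq_matI)
    fix i j assume "i < dim_row (Ut * M * mat_adjoint Ut)" "j < dim_col (Ut * M * mat_adjoint Ut)"
    hence ij: "i < n" "j < n" using Ut Mc by auto
    define B where "B = Matrix.mat d d (\<lambda>(a,b). M $$ (a*k + i mod k, b*k + j mod k))"
    have B: "B \<in> carrier_mat d d" unfolding B_def by auto
    have "tensor_id d k (\<lambda>A. U * A * mat_adjoint U) M $$ (i,j) = (U * B * mat_adjoint U) $$ (i div k, j div k)"
      unfolding tensor_id_def B_def using ij n_def by simp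
    also have "\<dots> = (\<Sum>a<d. \<Sum>b<d. U $$ (i div k,a) * M $$ (a*k + i mod k, b*k + j mod k) * cnj (U $$ (j div k,b)))"
      using index_mult_mult_adjoint[OF U B divl[OF ij(1)] divl[OF ij(2)]] unfolding B_def by simp
    also have "\<dots> = (Ut * M * mat_adjoint Ut) $$ (i,j)"
    proof -
      have "(Ut * M * mat_adjoint Ut) $$ (i,j) = (\<Sum>p<n. \<Sum>p'<n. Ut $$ (i,p) * M $$ (p,p') * cnj (Ut $$ (j,p')))"
        by (rule index_mult_mult_adjoint[OF Ut Mc ij])
      also have "\<dots> = (\<Sum>a<d. \<Sum>x<k. \<Sum>b<d. \<Sum>y<k. Ut $$ (i,a*k+x) * M $$ (a*k+x,b*k+y) * cnj (Ut $$ (j,b*k+y)))"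
        unfolding n_def sum_lessThan_mult_split by simp
      also have "\<dots> = (\<Sum>a<d. \<Sum>x<k. \<Sum>b<d. \<Sum>y<k. (if x = i mod k then U $$ (i div k, a) else 0)
          * M $$ (a*k+x,b*k+y) * cnj (if y = j mod k then U $$ (j div k, b) else 0))"
        using ij unfolding Ut_def tensor_one_def by (intro sum.cong refl) (auto simp: mult_add_less_mult n_def)
      also have "\<dots> = (\<Sum>a<d. \<Sum>b<d. U $$ (i div k, a) * M $$ (a*k + i mod k, b*k + j mod k) * cnj (U $$ (j div k, b)))"
        using modl[OF ij(1)] modl[OF ij(2)]
        by (simp add: if_distrib[of "\<lambda>x. x * _"] if_distrib[of "\<lambda>x. _ * x"] if_distrib[of cnj] sum_if_cond_const cong: if_cong)
      finally show ?thesis by simp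
    qed
    finally show "tensor_id d k (\<lambda>A. U * A * mat_adjoint U) M $$ (i,j) = (Ut * M * mat_adjoint Ut) $$ (i,j)" .
  qed (use Ut Mc n_def in \<open>auto simp: tensor_id_def\<close>)
  thus ?thesis unfolding Ut_def .
qed

lemma completely_positive_unitary_conj:
  assumes U: "U \<in> carrier_mat d d"
  shows "completely_positive d (\<lambda>A. U * A * mat_adjoint U)"
  unfolding completely_positive_def
proof (intro allI impI)
  fix k M assume M: "psd_mat (d * k) M"
  hence "M \<in> carrier_mat (d * k) (d * k)" unfolding psd_mat_def hermitian_mat_def by auto
  moreover have "tensor_one d k U \<in> carrier_mat (d * k) (d * k)" unfolding tensor_one_def by auto
  ultimately show "psd_mat (d * k) (tensor_id d k (\<lambda>A. U * A * mat_adjoint U) M)"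
    using tensor_id_unitary_conj[OF U] psd_mat_congruence[of "tensor_one d k U" "d * k" M] M by simp
qed

lemma bistochastic_unitary_conj:
  assumes u: "unitary_mat d U"
  shows "bistochastic d (\<lambda>A. U * A * mat_adjoint U)"
proof -
  have U: "U \<in> carrier_mat d d" using u unitary_mat_carrier by auto
  have lin: "linear_map_on d (\<lambda>A. U * A * mat_adjoint U)"
    unfolding linear_map_on_def
  proof (intro conjI ballI allI)
    fix A :: "complex mat" assume A: "A \<in> carrier_mat d d"
    show "U * A * mat_adjoint U \<in> carrier_mat d d" using U A by simp
    fix B :: "complex mat" assume B: "B \<in> carrier_mat d d"
    show "U * (A + B) * mat_adjoint U = U * A * mat_adjoint U + U * B * mat_adjoint U"
      using U A B by (simp add: mult_add_distrib_mat[of _ d d] add_mult_distrib_mat[of _ d d _ _ d])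
  next
    fix A :: "complex mat" and c assume A: "A \<in> carrier_mat d d"
    show "U * (c \<cdot>\<^sub>m A) * mat_adjoint U = c \<cdot>\<^sub>m (U * A * mat_adjoint U)"
      using U A by (simp add: mult_smult_distrib[of _ d d _ d] mult_smult_assoc_mat[of _ d d _ d])
  qed
  have "U * 1\<^sub>m d * mat_adjoint U = 1\<^sub>m d" using U unitary_mat_right[OF u] by simp
  thus ?thesis unfolding bistochastic_def using lin mtrace_unitary_conj[OF u] completely_positive_unitary_conj[OF U] by auto
qed

definition perm_mat :: "nat \<Rightarrow> (nat \<Rightarrow> nat) \<Rightarrow> complex mat" where
  "perm_mat d p = Matrix.mat d d (\<lambda>(i,j). if j = p i then 1 else 0)"

lemma unitary_perm_mat:
  assumes bp: "bij_betw p {..<d} {..<d}"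
  shows "unitary_mat d (perm_mat d p)"
proof -
  define Q where "Q = perm_mat d p"
  have Q: "Q \<in> carrier_mat d d" unfolding Q_def perm_mat_def by auto
  have "mat_adjoint Q * Q = 1\<^sub>m d"
  proof (rule eq_matI)
    fix i j assume "i < dim_row (1\<^sub>m d)" "j < dim_col (1\<^sub>m d)"
    hence ij: "i < d" "j < d" by auto
    have "(mat_adjoint Q * Q) $$ (i,j) = (\<Sum>k<d. (if i = p k then 1 else 0) * (if j = p k then 1 else 0))"
      using ij Q unfolding Q_def perm_mat_def by (intro trans[OF index_mult_mat_sum]) (auto simp: if_distrib[of cnj] cong: if_cong)
    also have "\<dots> = (\<Sum>t<d. (if i = t then 1 else 0) * (if j = t then 1 else 0))"
      by (rule sum.reindex_bij_betw[OF bp, of "\<lambda>t. (if i = t then 1 else 0) * (if j = t then (1::complex) else 0)"])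
    also have "\<dots> = 1\<^sub>m d $$ (i,j)" using ij by (simp add: if_distrib[of "\<lambda>x. x * _"] cong: if_cong)
    finally show "(mat_adjoint Q * Q) $$ (i,j) = 1\<^sub>m d $$ (i,j)" .
  qed (use Q in auto)
  thus ?thesis using Q unfolding Q_def unitary_mat_def by auto
qed

lemma perm_mat_diag:
  assumes bp: "bij_betw p {..<d} {..<d}"
  shows "perm_mat d p * dg d l * mat_adjoint (perm_mat d p) = dg d (\<lambda>i. l (p i))"
proof -
  define Q where "Q = perm_mat d p"
  have Q: "Q \<in> carrier_mat d d" unfolding Q_def perm_mat_def by auto
  have pl: "i < d \<Longrightarrow> p i < d" for i using bp bij_betwE by blast
  have pinj: "i < d \<Longrightarrow> j < d \<Longrightarrow> p i = p j \<Longrightarrow> i = j" for i j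
    using bp unfolding bij_betw_def inj_on_def by auto
  have "Q * dg d l * mat_adjoint Q = dg d (\<lambda>i. l (p i))"
  proof (rule eq_matI)
    fix i j assume "i < dim_row (dg d (\<lambda>i. l (p i)))" "j < dim_col (dg d (\<lambda>i. l (p i)))"
    hence ij: "i < d" "j < d" by auto
    have "(Q * dg d l * mat_adjoint Q) $$ (i,j) = (\<Sum>k<d. Q $$ (i,k) * complex_of_real (l k) * mat_adjoint Q $$ (k,j))"
      by (rule index_mult_diag_mult) (use Q ij in auto)
    also have "\<dots> = (\<Sum>k<d. (if k = p i then complex_of_real (l k) * (if k = p j then 1 else 0) else 0))"
      using ij unfolding Q_def perm_mat_def by (intro sum.cong refl) auto
    also have "\<dots> = (if p i = p j then complex_of_real (l (p i)) else 0)"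
      using pl[OF ij(1)] by (simp add: sum.delta')
    also have "\<dots> = dg d (\<lambda>i. l (p i)) $$ (i,j)" using ij pinj by auto
    finally show "(Q * dg d l * mat_adjoint Q) $$ (i,j) = dg d (\<lambda>i. l (p i)) $$ (i,j)" .
  qed (use Q in auto)
  thus ?thesis unfolding Q_def .
qed

section \<open>Attainment\<close>

lemma rel_entropy_same_basis:
  assumes "unitary_mat d V" and "\<forall>i<d. 0 < g i" and "\<forall>i<d. 0 < m i"
  shows "rel_entropy (V * dg d g * mat_adjoint V) (V * dg d m * mat_adjoint V)
     = (\<Sum>i<d. g i * log 2 (g i)) - (\<Sum>i<d. g i * log 2 (m i))"
  using mtrace_mult_mat_log_self[OF assms(1,2)] mtrace_unitary_diag_mult_same_basis[OF assms(1)]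
  unfolding rel_entropy_def mat_log_unitary_diag[OF assms(1,3) refl] by simp

lemma unitary_conj_diag_perm:
  assumes uW: "unitary_mat d W" and uV: "unitary_mat d V"
    and al: "bij_betw al {..<d} {..<d}" and q: "bij_betw q {..<d} {..<d}"
  obtains U where "unitary_mat d U"
    and "U * (W * dg d (\<lambda>k. l (al k)) * mat_adjoint W) * mat_adjoint U = V * dg d (\<lambda>j. l (q j)) * mat_adjoint V"
proof -
  define p where "p j = inv_into {..<d} al (q j)" for j
  have p: "bij_betw p {..<d} {..<d}"
    unfolding p_def using bij_betw_trans[OF q bij_betw_inv_into[OF al]] by (simp add: o_def)
  have l_p: "l (al (p j)) = l (q j)" if "j < d" for j
    unfolding p_def using that q al by (metis bij_betwE bij_betw_inv_into_right lessThan_iff)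
  define U where "U = V * perm_mat d p * mat_adjoint W"
  have uP: "unitary_mat d (perm_mat d p)" by (rule unitary_perm_mat[OF p])
  have V: "V \<in> carrier_mat d d" and P: "perm_mat d p \<in> carrier_mat d d" and W: "W \<in> carrier_mat d d"
    using uV uP uW unitary_mat_carrier by auto
  have "\<And>X. X \<in> carrier_mat d d \<Longrightarrow> mat_adjoint W * (W * X) = X"
    by (rule unitary_mat_cancel(1)[OF uW])
  hence "U * (W * dg d (\<lambda>k. l (al k)) * mat_adjoint W) * mat_adjoint U
      = V * (perm_mat d p * dg d (\<lambda>k. l (al k)) * mat_adjoint (perm_mat d p)) * mat_adjoint V"
    unfolding U_def using V P W by (simp add: mat_adjoint_mult[of _ d d _ d] assoc_mult_mat[of _ d d _ d _ d])
  also have "\<dots> = V * dg d (\<lambda>j. l (q j)) * mat_adjoint V"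
    unfolding perm_mat_diag[OF p] using l_p by (intro arg_cong2[where f = "(*)"] refl eq_matI) auto
  finally show ?thesis
    using that unitary_mat_mult[OF unitary_mat_mult[OF uV uP] unitary_mat_adjoint[OF uW]] unfolding U_def by blast
qed

text \<open>The maximum is attained by the unitary that carries the eigenvector of \<open>\<rho>\<close> for its
  \<open>j\<close>-th largest eigenvalue to the eigenvector of \<open>\<sigma>\<close> for its \<open>j\<close>-th smallest one.\<close>

lemma rel_entropy_unitary_conj_attains:
  assumes \<rho>: "pd_mat d \<rho>" and \<sigma>: "pd_mat d \<sigma>"
    and lam: "eigenvalues_desc d \<rho> lam" and mu: "eigenvalues_desc d \<sigma> mu"
  obtains U where "unitary_mat d U"
    and "rel_entropy (U * \<rho> * mat_adjoint U) \<sigma>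
       = Re (mtrace (\<rho> * mat_log \<rho>)) - (\<Sum>j<d. lam j * log 2 (mu (d - 1 - j)))"
proof -
  obtain W al where uW: "unitary_mat d W" and al: "bij_betw al {..<d} {..<d}"
    and \<rho>_eq: "\<rho> = W * dg d (\<lambda>k. lam (al k)) * mat_adjoint W" and lam_pos: "\<forall>j<d. 0 < lam j"
    using pd_mat_eigendecomposition[OF \<rho> lam] .
  obtain V be where uV: "unitary_mat d V" and be: "bij_betw be {..<d} {..<d}"
    and \<sigma>_eq: "\<sigma> = V * dg d (\<lambda>j. mu (be j)) * mat_adjoint V" and mu_pos: "\<forall>j<d. 0 < mu j"
    using pd_mat_eigendecomposition[OF \<sigma> mu] .
  define rb where "rb j = d - 1 - be j" for j
  have rb: "bij_betw rb {..<d} {..<d}"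
    unfolding rb_def using bij_betw_trans[OF be bij_betw_reverse_lessThan[of d]] by (simp add: o_def)
  obtain U where uU: "unitary_mat d U"
    and U\<rho>: "U * \<rho> * mat_adjoint U = V * dg d (\<lambda>j. lam (rb j)) * mat_adjoint V"
    using unitary_conj_diag_perm[OF uW uV al rb] unfolding \<rho>_eq by blast
  have pos: "\<forall>j<d. 0 < lam (rb j)" "\<forall>j<d. 0 < mu (be j)"
    using lam_pos mu_pos rb be bij_betwE by blast+
  have "rel_entropy (U * \<rho> * mat_adjoint U) \<sigma>
      = (\<Sum>j<d. lam (rb j) * log 2 (lam (rb j))) - (\<Sum>j<d. lam (rb j) * log 2 (mu (be j)))"
    unfolding U\<rho> \<sigma>_eq by (rule rel_entropy_same_basis[OF uV pos])
  also have "(\<Sum>j<d. lam (rb j) * log 2 (lam (rb j))) = Re (mtrace (\<rho> * mat_log \<rho>))"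
    unfolding mtrace_mult_mat_log_eigenvalues[OF \<rho> lam] by (rule sum.reindex_bij_betw[OF rb])
  also have "(\<Sum>j<d. lam (rb j) * log 2 (mu (be j))) = (\<Sum>s<d. lam (d - 1 - s) * log 2 (mu s))"
    unfolding rb_def by (rule sum.reindex_bij_betw[OF be, of "\<lambda>s. lam (d - 1 - s) * log 2 (mu s)"])
  also have "\<dots> = (\<Sum>t<d. lam (d - 1 - (d - 1 - t)) * log 2 (mu (d - 1 - t)))"
    by (rule sum.reindex_bij_betw[OF bij_betw_reverse_lessThan, symmetric])
  also have "\<dots> = (\<Sum>t<d. lam t * log 2 (mu (d - 1 - t)))"
    by (intro sum.cong refl) (auto simp: Suc_diff_Suc)
  finally show ?thesis using that uU by blast
qed

theorem mainTheorem6: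
  fixes d :: nat and \<rho> \<sigma> :: "complex mat" and lam mu :: "nat \<Rightarrow> real"
  assumes "pd_mat d \<rho>" and "pd_mat d \<sigma>"
    and "eigenvalues_desc d \<rho> lam" and "eigenvalues_desc d \<sigma> mu"
  defines "R \<equiv> Re (mtrace (\<rho> * mat_log \<rho>)) - (\<Sum>j<d. lam j * log 2 (mu (d - 1 - j)))"
  shows "(\<forall>\<Phi>. bistochastic d \<Phi> \<longrightarrow> rel_entropy (\<Phi> \<rho>) \<sigma> \<le> R)
       \<and> (\<exists>\<Phi>. bistochastic d \<Phi> \<and> rel_entropy (\<Phi> \<rho>) \<sigma> = R)
       \<and> (\<forall>U. unitary_mat d U \<longrightarrow> rel_entropy (U * \<rho> * mat_adjoint U) \<sigma> \<le> R)
       \<and> (\<exists>U. unitary_mat d U \<and> rel_entropy (U * \<rho> * mat_adjoint U) \<sigma> = R)"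
proof (intro conjI)
  show bound: "\<forall>\<Phi>. bistochastic d \<Phi> \<longrightarrow> rel_entropy (\<Phi> \<rho>) \<sigma> \<le> R"
    unfolding R_def using rel_entropy_bistochastic_le[OF _ assms(1-4)] by blast
  obtain U where uU: "unitary_mat d U" and eq: "rel_entropy (U * \<rho> * mat_adjoint U) \<sigma> = R"
    unfolding R_def using rel_entropy_unitary_conj_attains[OF assms(1-4)] by blast
  show "\<exists>U. unitary_mat d U \<and> rel_entropy (U * \<rho> * mat_adjoint U) \<sigma> = R"
    using uU eq by blast
  show "\<exists>\<Phi>. bistochastic d \<Phi> \<and> rel_entropy (\<Phi> \<rho>) \<sigma> = R"
    using bistochastic_unitary_conj[OF uU] eq by (intro exI[of _ "\<lambda>A. U * A * mat_adjoint U"]) simp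
  show "\<forall>U. unitary_mat d U \<longrightarrow> rel_entropy (U * \<rho> * mat_adjoint U) \<sigma> \<le> R"
    using bound bistochastic_unitary_conj by fastforce
qed

end
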